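(* Let $k$ be a commutative ring and $A$ a commutative $k$-algebra with $\mathbb Q\subset A$ such that $\operatorname{Der}_k(A)$ is a projective $A$-module of finite rank. Then the canonical homomorphism of graded $A$-algebras $\tau_{A/k}:\operatorname{Sym}\operatorname{Der}_k(A)\to\operatorname{gr}\operatorname{Diff}_{A/k}$ is an isomorphism.
   Context: $\operatorname{Diff}_{A/k}$ is the ring of $k$-linear differential operators of $A$ (order $0$ = multiplications by elements of $A$; $\varphi$ has order $\le i+1$ iff $\varphi\circ a-a\circ\varphi$ has order $\le i$ for all $a$), filtered by order; $\operatorname{gr}\operatorname{Diff}_{A/k}$ is the associated graded ring, which is commutative. $\tau_{A/k}$ is the graded $A$-algebra homomorphism induced by the $A$-linear isomorphism $\operatorname{Der}_k(A)\to\operatorname{gr}^1\operatorname{Diff}_{A/k}$, $\delta\mapsto\sigma_1(\delta)$ (class of $\delta$ modulo order $0$ operators). *)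

theory Defs
  imports Main "HOL-Library.Multiset"
begin

text \<open>A commutative k-algebra A: types 'k and 'a (commutative rings) together with a
 ring homomorphism iota : k -> A (the structure map).  Everything below is relative to iota.\<close>

definition ring_hom_map :: "('k::comm_ring_1 \<Rightarrow> 'a::comm_ring_1) \<Rightarrow> bool" where
  "ring_hom_map \<iota> \<longleftrightarrow> \<iota> 1 = 1 \<and> (\<forall>x y. \<iota> (x + y) = \<iota> x + \<iota> y) \<and> (\<forall>x y. \<iota> (x * y) = \<iota> x * \<iota> y)"

text \<open>Q is contained in A: every positive integer is invertible in A.\<close>
definition contains_rationals :: "'a::comm_ring_1 itself \<Rightarrow> bool" where
  "contains_rationals _ \<longleftrightarrow> (\<forall>n::nat. n > 0 \<longrightarrow> (\<exists>b::'a. of_nat n * b = 1))"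

definition klinear :: "('k::comm_ring_1 \<Rightarrow> 'a::comm_ring_1) \<Rightarrow> ('a \<Rightarrow> 'a) \<Rightarrow> bool" where
  "klinear \<iota> \<phi> \<longleftrightarrow> (\<forall>x y. \<phi> (x + y) = \<phi> x + \<phi> y) \<and> (\<forall>c x. \<phi> (\<iota> c * x) = \<iota> c * \<phi> x)"

definition Der :: "('k::comm_ring_1 \<Rightarrow> 'a::comm_ring_1) \<Rightarrow> ('a \<Rightarrow> 'a) set" where
  "Der \<iota> = {\<delta>. klinear \<iota> \<delta> \<and> (\<forall>x y. \<delta> (x * y) = x * \<delta> y + y * \<delta> x)}"

text \<open>Differential operators of order <= n (Grothendieck's inductive definition).\<close>
fun diff_le :: "('k::comm_ring_1 \<Rightarrow> 'a::comm_ring_1) \<Rightarrow> nat \<Rightarrow> ('a \<Rightarrow> 'a) \<Rightarrow> bool" where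
  "diff_le \<iota> 0 \<phi> = (\<exists>a. \<phi> = (\<lambda>x. a * x))"
| "diff_le \<iota> (Suc i) \<phi> = (klinear \<iota> \<phi> \<and> (\<forall>a. diff_le \<iota> i (\<lambda>x. \<phi> (a * x) - a * \<phi> x)))"

text \<open>Membership in the filtration step below degree n (order <= n-1; the zero operator for n = 0).\<close>
definition diff_lower :: "('k::comm_ring_1 \<Rightarrow> 'a::comm_ring_1) \<Rightarrow> nat \<Rightarrow> ('a \<Rightarrow> 'a) \<Rightarrow> bool" where
  "diff_lower \<iota> n \<phi> = (case n of 0 \<Rightarrow> \<phi> = (\<lambda>x. 0) | Suc m \<Rightarrow> diff_le \<iota> m \<phi>)"

text \<open>Der_k(A) is a finitely generated projective A-module: an A-linear retract of a finite free
  module A^m (vectors nat => 'a vanishing from m on).\<close>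
definition free_fin :: "nat \<Rightarrow> (nat \<Rightarrow> 'a::comm_ring_1) set" where
  "free_fin m = {v. \<forall>i\<ge>m. v i = 0}"

definition Der_fg_projective :: "('k::comm_ring_1 \<Rightarrow> 'a::comm_ring_1) \<Rightarrow> bool" where
  "Der_fg_projective \<iota> \<longleftrightarrow> (\<exists>m (s :: ('a \<Rightarrow> 'a) \<Rightarrow> nat \<Rightarrow> 'a) (p :: (nat \<Rightarrow> 'a) \<Rightarrow> 'a \<Rightarrow> 'a).
      (\<forall>\<delta>\<in>Der \<iota>. s \<delta> \<in> free_fin m)
    \<and> (\<forall>v\<in>free_fin m. p v \<in> Der \<iota>)
    \<and> (\<forall>\<delta>\<in>Der \<iota>. \<forall>\<delta>'\<in>Der \<iota>. s (\<lambda>x. \<delta> x + \<delta>' x) = (\<lambda>i. s \<delta> i + s \<delta>' i))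
    \<and> (\<forall>\<delta>\<in>Der \<iota>. \<forall>a. s (\<lambda>x. a * \<delta> x) = (\<lambda>i. a * s \<delta> i))
    \<and> (\<forall>v\<in>free_fin m. \<forall>w\<in>free_fin m. p (\<lambda>i. v i + w i) = (\<lambda>x. p v x + p w x))
    \<and> (\<forall>v\<in>free_fin m. \<forall>a. p (\<lambda>i. a * v i) = (\<lambda>x. a * p v x))
    \<and> (\<forall>\<delta>\<in>Der \<iota>. p (s \<delta>) = \<delta>))"

text \<open>Degree-n part of the symmetric algebra: the free A-module on n-tuples of derivations
  (finitely supported coefficient functions) modulo the submodule sym_rel generated by
  multilinearity and symmetry relations.\<close>
definition sym_free :: "('k::comm_ring_1 \<Rightarrow> 'a::comm_ring_1) \<Rightarrow> nat \<Rightarrow> (('a \<Rightarrow> 'a) list \<Rightarrow> 'a) set" where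
  "sym_free \<iota> n = {c. finite {xs. c xs \<noteq> 0} \<and> (\<forall>xs. c xs \<noteq> 0 \<longrightarrow> length xs = n \<and> set xs \<subseteq> Der \<iota>)}"

definition single :: "('a \<Rightarrow> 'a) list \<Rightarrow> ('a \<Rightarrow> 'a) list \<Rightarrow> 'a::comm_ring_1" where
  "single xs = (\<lambda>zs. if zs = xs then 1 else 0)"

inductive sym_rel_p :: "('k::comm_ring_1 \<Rightarrow> 'a::comm_ring_1) \<Rightarrow> nat \<Rightarrow> (('a \<Rightarrow> 'a) list \<Rightarrow> 'a) \<Rightarrow> bool"
  for \<iota> :: "'k::comm_ring_1 \<Rightarrow> 'a::comm_ring_1" and n :: nat where
  zero: "sym_rel_p \<iota> n (\<lambda>zs. 0)"
| add: "sym_rel_p \<iota> n c \<Longrightarrow> sym_rel_p \<iota> n d \<Longrightarrow> sym_rel_p \<iota> n (\<lambda>zs. c zs + d zs)"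
| smult: "sym_rel_p \<iota> n c \<Longrightarrow> sym_rel_p \<iota> n (\<lambda>zs. a * c zs)"
| additive: "set xs \<subseteq> Der \<iota> \<Longrightarrow> set ys \<subseteq> Der \<iota> \<Longrightarrow> \<delta> \<in> Der \<iota> \<Longrightarrow> \<delta>' \<in> Der \<iota> \<Longrightarrow>
    length xs + length ys + 1 = n \<Longrightarrow>
    sym_rel_p \<iota> n (\<lambda>zs. single (xs @ [(\<lambda>x. \<delta> x + \<delta>' x)] @ ys) zs - single (xs @ [\<delta>] @ ys) zs
           - single (xs @ [\<delta>'] @ ys) zs)"
| homogeneous: "set xs \<subseteq> Der \<iota> \<Longrightarrow> set ys \<subseteq> Der \<iota> \<Longrightarrow> \<delta> \<in> Der \<iota> \<Longrightarrow>
    length xs + length ys + 1 = n \<Longrightarrow>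
    sym_rel_p \<iota> n (\<lambda>zs. single (xs @ [(\<lambda>x. a * \<delta> x)] @ ys) zs - a * single (xs @ [\<delta>] @ ys) zs)"
| symmetric: "set xs \<subseteq> Der \<iota> \<Longrightarrow> length xs = n \<Longrightarrow> mset ys = mset xs \<Longrightarrow>
    sym_rel_p \<iota> n (\<lambda>zs. single xs zs - single ys zs)"

definition sym_rel :: "('k::comm_ring_1 \<Rightarrow> 'a::comm_ring_1) \<Rightarrow> nat \<Rightarrow> (('a \<Rightarrow> 'a) list \<Rightarrow> 'a) set" where
  "sym_rel \<iota> n = {c. sym_rel_p \<iota> n c}"

definition comp_list :: "('a \<Rightarrow> 'a) list \<Rightarrow> 'a \<Rightarrow> 'a" where
  "comp_list xs = foldr (\<circ>) xs id"

text \<open>tau on representatives: delta_1 ... delta_n |-> delta_1 o ... o delta_n (class mod lower order).\<close>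
definition tau :: "(('a \<Rightarrow> 'a) list \<Rightarrow> 'a::comm_ring_1) \<Rightarrow> 'a \<Rightarrow> 'a" where
  "tau c = (\<lambda>x. \<Sum>xs\<in>{xs. c xs \<noteq> 0}. c xs * comp_list xs x)"

end

theory Submission
  imports Defs
begin

(* Well-definedness: composites of n derivations have order <= n, and each generating
   relation (additivity, homogeneity, symmetry) is sent to an operator of order <= n-1.

   Bijectivity uses the principal symbol sigma(phi)(a_1,..,a_n) = [..[phi,a_1],..,a_n](1).
   For phi of order <= n it is a symmetric multiderivation, and it vanishes iff phi has
   order <= n-1.  The symbol of tau(delta_1 ... delta_n) is the permanent of (delta_i(a_j)).
   Since Der(A) is a retract of A^m, a symmetric multiderivation F has coordinates with
   respect to the images gen_j of the unit vectors, and the element lift(F) of Sym^n built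
   from them satisfies  sigma(tau(lift F)) = n! * F  and  lift(sigma(tau c)) == n! * c
   modulo relations.  As n! is invertible in A, this yields surjectivity and injectivity. *)

lemma Der_iff: "\<delta> \<in> Der \<iota> \<longleftrightarrow> (\<forall>x y. \<delta> (x + y) = \<delta> x + \<delta> y) \<and> (\<forall>c x. \<delta> (\<iota> c * x) = \<iota> c * \<delta> x)
   \<and> (\<forall>x y. \<delta> (x * y) = x * \<delta> y + y * \<delta> x)"
  by (simp add: Der_def klinear_def)

lemma Der_add: "\<delta> \<in> Der \<iota> \<Longrightarrow> \<delta> (x + y) = \<delta> x + \<delta> y"
  unfolding Der_iff by blast

lemma Der_mult: "\<delta> \<in> Der \<iota> \<Longrightarrow> \<delta> (x * y) = x * \<delta> y + y * \<delta> x"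
  unfolding Der_iff by blast

lemma Der_hom: "\<delta> \<in> Der \<iota> \<Longrightarrow> \<delta> (\<iota> c * x) = \<iota> c * \<delta> x"
  unfolding Der_iff by blast

lemma Der_zero: "\<delta> \<in> Der \<iota> \<Longrightarrow> \<delta> 0 = 0"
  using Der_add[of \<delta> \<iota> 0 0] by simp

lemma Der_diff: "\<delta> \<in> Der \<iota> \<Longrightarrow> \<delta> (x - y) = \<delta> x - \<delta> y"
  using Der_add[of \<delta> \<iota> "x - y" y] by simp

lemma Der_klinear: "\<delta> \<in> Der \<iota> \<Longrightarrow> klinear \<iota> \<delta>"
  by (simp add: Der_def)

lemma Der_zero_map: "(\<lambda>x. 0) \<in> Der \<iota>"
  by (simp add: Der_iff)

lemma Der_plus: "\<delta> \<in> Der \<iota> \<Longrightarrow> \<delta>' \<in> Der \<iota> \<Longrightarrow> (\<lambda>x. \<delta> x + \<delta>' x) \<in> Der \<iota>"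
proof -
  assume a: "\<delta> \<in> Der \<iota>" "\<delta>' \<in> Der \<iota>"
  show ?thesis unfolding Der_iff
    using Der_add[OF a(1)] Der_add[OF a(2)] Der_hom[OF a(1)] Der_hom[OF a(2)]
      Der_mult[OF a(1)] Der_mult[OF a(2)]
    by (simp add: algebra_simps)
qed

lemma Der_smult: "\<delta> \<in> Der \<iota> \<Longrightarrow> (\<lambda>x. a * \<delta> x) \<in> Der \<iota>"
proof -
  assume d: "\<delta> \<in> Der \<iota>"
  show ?thesis unfolding Der_iff
    using Der_add[OF d] Der_hom[OF d] Der_mult[OF d] by (simp add: algebra_simps)
qed

lemma Der_sum:
  "finite S \<Longrightarrow> (\<And>i. i \<in> S \<Longrightarrow> d i \<in> Der \<iota>) \<Longrightarrow> (\<lambda>x. \<Sum>i\<in>S. g i * d i x) \<in> Der \<iota>"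
proof (induction S rule: finite_induct)
  case empty then show ?case by (simp add: Der_zero_map)
next
  case (insert i S)
  then show ?case using Der_plus[OF Der_smult[of "d i" \<iota> "g i"], of "\<lambda>x. \<Sum>i\<in>S. g i * d i x"]
    by simp
qed

section \<open>Commutators with multiplication operators\<close>

definition bracket :: "('a \<Rightarrow> 'a) \<Rightarrow> 'a \<Rightarrow> 'a \<Rightarrow> 'a::comm_ring_1" where
  "bracket \<phi> a = (\<lambda>x. \<phi> (a * x) - a * \<phi> x)"

fun brackets :: "('a \<Rightarrow> 'a) \<Rightarrow> 'a list \<Rightarrow> 'a \<Rightarrow> 'a::comm_ring_1" where
  "brackets \<phi> [] = \<phi>"
| "brackets \<phi> (a # as) = brackets (bracket \<phi> a) as"

lemma diff_le_Suc_bracket: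
  "diff_le \<iota> (Suc i) \<phi> = (klinear \<iota> \<phi> \<and> (\<forall>a. diff_le \<iota> i (bracket \<phi> a)))"
  by (simp add: bracket_def)

lemma diff_le_0_iff: "diff_le \<iota> 0 \<phi> \<longleftrightarrow> (\<exists>a. \<phi> = (\<lambda>x. a * x))"
  by simp

declare diff_le.simps[simp del]

lemma diff_le_0_mult: "diff_le \<iota> 0 (\<lambda>x. a * x)"
  by (auto simp: diff_le_0_iff)

lemma diff_le_0E: "diff_le \<iota> 0 \<phi> \<Longrightarrow> (\<And>a. \<phi> = (\<lambda>x. a * x) \<Longrightarrow> P) \<Longrightarrow> P"
  by (auto simp: diff_le_0_iff)

lemma bracket_mult[simp]: "bracket (\<lambda>x. c * x) a = (\<lambda>x. 0)"
  by (simp add: bracket_def algebra_simps)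

lemma bracket_plus: "bracket (\<lambda>x. \<phi> x + \<psi> x) a = (\<lambda>x. bracket \<phi> a x + bracket \<psi> a x)"
  by (simp add: bracket_def algebra_simps)

lemma bracket_minus: "bracket (\<lambda>x. \<phi> x - \<psi> x) a = (\<lambda>x. bracket \<phi> a x - bracket \<psi> a x)"
  by (simp add: bracket_def algebra_simps)

lemma bracket_smult: "bracket (\<lambda>x. c * \<phi> x) a = (\<lambda>x. c * bracket \<phi> a x)"
  by (simp add: bracket_def algebra_simps)

lemma bracket_sum:
  "bracket (\<lambda>x. \<Sum>i\<in>S. g i * f i x) a = (\<lambda>x. \<Sum>i\<in>S. g i * bracket (f i) a x)"
  by (simp add: bracket_def algebra_simps sum_distrib_left sum_subtractf)

text \<open>Multiplication operators commute, so iterated brackets do not depend on the order.\<close>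
lemma bracket_swap: "bracket (bracket \<phi> a) b = bracket (bracket \<phi> b) a"
  by (auto simp: bracket_def algebra_simps)

lemma brackets_plus: "brackets (\<lambda>x. \<phi> x + \<psi> x) as = (\<lambda>x. brackets \<phi> as x + brackets \<psi> as x)"
  by (induction as arbitrary: \<phi> \<psi>) (auto simp: bracket_plus)

lemma brackets_minus: "brackets (\<lambda>x. \<phi> x - \<psi> x) as = (\<lambda>x. brackets \<phi> as x - brackets \<psi> as x)"
  by (induction as arbitrary: \<phi> \<psi>) (auto simp: bracket_minus)

lemma brackets_smult: "brackets (\<lambda>x. c * \<phi> x) as = (\<lambda>x. c * brackets \<phi> as x)"
  by (induction as arbitrary: \<phi>) (auto simp: bracket_smult)

lemma brackets_sum:
  "brackets (\<lambda>x. \<Sum>i\<in>S. g i * f i x) as = (\<lambda>x. \<Sum>i\<in>S. g i * brackets (f i) as x)"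
  by (induction as arbitrary: f) (auto simp: bracket_sum)

lemma brackets_append: "brackets \<phi> (as @ bs) = brackets (brackets \<phi> as) bs"
  by (induction as arbitrary: \<phi>) auto

lemma brackets_Cons_snoc: "brackets \<phi> (a # as) = brackets \<phi> (as @ [a])"
proof (induction as arbitrary: \<phi>)
  case Nil then show ?case by simp
next
  case (Cons b as)
  have "brackets \<phi> (a # b # as) = brackets (bracket (bracket \<phi> b) a) as" by (simp add: bracket_swap)
  also have "\<dots> = brackets (bracket \<phi> b) (as @ [a])" using Cons.IH by simp
  finally show ?case by simp
qed

lemma brackets_perm: "mset as = mset bs \<Longrightarrow> brackets \<phi> as = brackets \<phi> bs"
proof (induction as arbitrary: bs \<phi>)
  case Nil then show ?case by simp
next
  case (Cons a as)
  then have "a \<in> set bs" by (metis list.set_intros(1) set_mset_mset)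
  then obtain bs1 bs2 where bs: "bs = bs1 @ a # bs2" by (meson split_list)
  have m: "mset as = mset (bs1 @ bs2)" using Cons.prems bs by simp
  have "brackets \<phi> bs = brackets (brackets \<phi> (bs1 @ [a])) bs2"
    unfolding bs brackets_append[symmetric] by simp
  also have "\<dots> = brackets (bracket \<phi> a) (bs1 @ bs2)"
    by (simp only: brackets_Cons_snoc[symmetric]) (simp add: brackets_append)
  also have "\<dots> = brackets (bracket \<phi> a) as" using Cons.IH[OF m] by simp
  finally show ?case by simp
qed

section \<open>The filtration by order\<close>

lemma klinear_mult: "klinear \<iota> (\<lambda>x. a * x)"
  by (simp add: klinear_def algebra_simps)

lemma klinear_plus: "klinear \<iota> \<phi> \<Longrightarrow> klinear \<iota> \<psi> \<Longrightarrow> klinear \<iota> (\<lambda>x. \<phi> x + \<psi> x)"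
  unfolding klinear_def by (simp add: distrib_left)

lemma klinear_smult: "klinear \<iota> \<phi> \<Longrightarrow> klinear \<iota> (\<lambda>x. c * \<phi> x)"
  unfolding klinear_def by (simp add: distrib_left mult.left_commute)

lemma klinear_minus: "klinear \<iota> \<phi> \<Longrightarrow> klinear \<iota> \<psi> \<Longrightarrow> klinear \<iota> (\<lambda>x. \<phi> x - \<psi> x)"
  unfolding klinear_def by (simp add: right_diff_distrib)

lemma klinear_comp: "klinear \<iota> \<phi> \<Longrightarrow> klinear \<iota> \<psi> \<Longrightarrow> klinear \<iota> (\<phi> \<circ> \<psi>)"
  unfolding klinear_def by simp

lemma diff_le_klinear: "diff_le \<iota> n \<phi> \<Longrightarrow> klinear \<iota> \<phi>"
  by (cases n) (auto simp: diff_le_Suc_bracket diff_le_0_iff klinear_mult)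

lemma diff_le_additive: "diff_le \<iota> n \<phi> \<Longrightarrow> \<phi> (x + y) = \<phi> x + \<phi> y"
  using diff_le_klinear by (fastforce simp: klinear_def)

lemma diff_le_zero_app: "diff_le \<iota> n \<phi> \<Longrightarrow> \<phi> 0 = 0"
  using diff_le_additive[of \<iota> n \<phi> 0 0] by simp

lemma diff_le_diff_app: "diff_le \<iota> n \<phi> \<Longrightarrow> \<phi> (x - y) = \<phi> x - \<phi> y"
  using diff_le_additive[of \<iota> n \<phi> "x - y" y] by simp

lemma diff_le_zero: "diff_le \<iota> n (\<lambda>x. 0)"
proof (induction n)
  case 0 show ?case using diff_le_0_mult[of \<iota> 0] by simp
next
  case (Suc n) then show ?case by (simp add: diff_le_Suc_bracket klinear_def bracket_def)
qed

lemma diff_le_plus: "diff_le \<iota> n \<phi> \<Longrightarrow> diff_le \<iota> n \<psi> \<Longrightarrow> diff_le \<iota> n (\<lambda>x. \<phi> x + \<psi> x)"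
proof (induction n arbitrary: \<phi> \<psi>)
  case 0
  then obtain a b where "\<phi> = (\<lambda>x. a * x)" "\<psi> = (\<lambda>x. b * x)" by (auto elim!: diff_le_0E)
  then have "(\<lambda>x. \<phi> x + \<psi> x) = (\<lambda>x. (a + b) * x)" by (simp add: distrib_right)
  then show ?case by (simp add: diff_le_0_mult)
next
  case (Suc n)
  then show ?case by (simp add: diff_le_Suc_bracket bracket_plus klinear_plus)
qed

lemma diff_le_smult: "diff_le \<iota> n \<phi> \<Longrightarrow> diff_le \<iota> n (\<lambda>x. c * \<phi> x)"
proof (induction n arbitrary: \<phi>)
  case 0
  then obtain a where "\<phi> = (\<lambda>x. a * x)" by (auto elim!: diff_le_0E)
  then have "(\<lambda>x. c * \<phi> x) = (\<lambda>x. (c * a) * x)" by (simp add: mult.assoc)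
  then show ?case by (simp add: diff_le_0_mult)
next
  case (Suc n)
  then show ?case by (simp add: diff_le_Suc_bracket bracket_smult klinear_smult)
qed

lemma diff_le_neg: "diff_le \<iota> n \<phi> \<Longrightarrow> diff_le \<iota> n (\<lambda>x. - \<phi> x)"
  using diff_le_smult[of \<iota> n \<phi> "-1"] by simp

lemma diff_le_minus: "diff_le \<iota> n \<phi> \<Longrightarrow> diff_le \<iota> n \<psi> \<Longrightarrow> diff_le \<iota> n (\<lambda>x. \<phi> x - \<psi> x)"
  using diff_le_plus[of \<iota> n \<phi> "\<lambda>x. - \<psi> x"] diff_le_neg[of \<iota> n \<psi>] by simp

lemma diff_le_sum:
  "finite S \<Longrightarrow> (\<And>i. i \<in> S \<Longrightarrow> diff_le \<iota> n (f i)) \<Longrightarrow> diff_le \<iota> n (\<lambda>x. \<Sum>i\<in>S. g i * f i x)"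
proof (induction S rule: finite_induct)
  case empty then show ?case by (simp add: diff_le_zero)
next
  case (insert i S)
  then show ?case using diff_le_plus[OF diff_le_smult[of \<iota> n "f i" "g i"]] by simp
qed

lemma diff_lower_zero: "diff_lower \<iota> n (\<lambda>x. 0)"
  by (cases n) (auto simp: diff_lower_def diff_le_zero)

lemma diff_lower_plus:
  "diff_lower \<iota> n \<phi> \<Longrightarrow> diff_lower \<iota> n \<psi> \<Longrightarrow> diff_lower \<iota> n (\<lambda>x. \<phi> x + \<psi> x)"
  by (cases n) (auto simp: diff_lower_def diff_le_plus)

lemma diff_lower_smult: "diff_lower \<iota> n \<phi> \<Longrightarrow> diff_lower \<iota> n (\<lambda>x. a * \<phi> x)"
  by (cases n) (auto simp: diff_lower_def diff_le_smult)

lemma diff_le_comp: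
  "diff_le \<iota> n \<phi> \<Longrightarrow> diff_le \<iota> m \<psi> \<Longrightarrow> diff_le \<iota> (n + m) (\<phi> \<circ> \<psi>)"
proof (induction "n + m" arbitrary: n m \<phi> \<psi>)
  case 0
  then obtain a b where "\<phi> = (\<lambda>x. a * x)" "\<psi> = (\<lambda>x. b * x)" by (auto elim!: diff_le_0E)
  then have "\<phi> \<circ> \<psi> = (\<lambda>x. (a * b) * x)" by (auto simp: mult.assoc)
  then show ?case using 0 by (simp add: diff_le_0_mult)
next
  case (Suc k)
  have leibniz: "bracket (\<phi> \<circ> \<psi>) a = (\<lambda>x. bracket \<phi> a (\<psi> x) + \<phi> (bracket \<psi> a x))" for a
    unfolding bracket_def using diff_le_diff_app[OF Suc.prems(1)] by auto
  have left: "diff_le \<iota> k (\<lambda>x. bracket \<phi> a (\<psi> x))" for a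
  proof (cases n)
    case 0
    then obtain c where "\<phi> = (\<lambda>x. c * x)" using Suc.prems by (auto elim!: diff_le_0E)
    then show ?thesis by (simp add: diff_le_zero)
  next
    case (Suc n')
    then have "diff_le \<iota> (n' + m) (bracket \<phi> a \<circ> \<psi>)"
      using Suc.hyps Suc.prems by (intro Suc.hyps(1)) (auto simp: diff_le_Suc_bracket)
    then show ?thesis using Suc Suc.hyps by (simp add: comp_def)
  qed
  have right: "diff_le \<iota> k (\<lambda>x. \<phi> (bracket \<psi> a x))" for a
  proof (cases m)
    case 0
    then obtain c where "\<psi> = (\<lambda>x. c * x)" using Suc.prems by (auto elim!: diff_le_0E)
    then show ?thesis using diff_le_zero_app[OF Suc.prems(1)] by (simp add: diff_le_zero)
  next
    case (Suc m')
    then have "diff_le \<iota> (n + m') (\<phi> \<circ> bracket \<psi> a)"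
      using Suc.hyps Suc.prems by (intro Suc.hyps(1)) (auto simp: diff_le_Suc_bracket)
    then show ?thesis using Suc Suc.hyps by (simp add: comp_def)
  qed
  have "klinear \<iota> (\<phi> \<circ> \<psi>)"
    using Suc.prems by (intro klinear_comp diff_le_klinear) auto
  then show ?case
    unfolding Suc.hyps(2)[symmetric] diff_le_Suc_bracket leibniz
    using diff_le_plus[OF left right] by blast
qed

lemma Der_order_one: "\<delta> \<in> Der \<iota> \<Longrightarrow> diff_le \<iota> 1 \<delta>"
proof -
  assume d: "\<delta> \<in> Der \<iota>"
  have "bracket \<delta> a = (\<lambda>x. \<delta> a * x)" for a
    by (auto simp: bracket_def Der_mult[OF d] mult.commute)
  then show ?thesis by (simp add: diff_le_Suc_bracket Der_klinear[OF d] diff_le_0_mult)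
qed

lemma comp_list_Nil[simp]: "comp_list [] = id"
  by (simp add: comp_list_def)

lemma comp_list_Cons[simp]: "comp_list (d # xs) = d \<circ> comp_list xs"
  by (simp add: comp_list_def)

lemma comp_list_append: "comp_list (xs @ ys) = comp_list xs \<circ> comp_list ys"
  by (induction xs) auto

lemma comp_list_slot: "comp_list (xs @ d # ys) x = comp_list xs (d (comp_list ys x))"
  by (simp add: comp_list_append)

lemma diff_le_comp_list: "set xs \<subseteq> Der \<iota> \<Longrightarrow> diff_le \<iota> (length xs) (comp_list xs)"
proof (induction xs)
  case Nil
  have "comp_list [] = (\<lambda>x::'a. 1 * x)" by (simp add: fun_eq_iff)
  then show ?case using diff_le_0_mult[of \<iota> 1] by simp
next
  case (Cons d xs)
  then show ?case
    using diff_le_comp[OF Der_order_one[of d \<iota>], of "length xs" "comp_list xs"]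
    by (simp add: comp_def)
qed

lemma comp_list_additive:
  "set xs \<subseteq> Der \<iota> \<Longrightarrow> comp_list xs (x + y) = comp_list xs x + comp_list xs y"
  using diff_le_additive[OF diff_le_comp_list] by blast

text \<open>Commuting a derivation past an operator of order \<le> k gives order \<le> k:
  [[\<phi>, \<delta>], b] = [[\<phi>, b], \<delta>] + [\<phi>, \<delta> b].\<close>
lemma diff_le_commutator:
  "\<delta> \<in> Der \<iota> \<Longrightarrow> diff_le \<iota> k \<phi> \<Longrightarrow> diff_le \<iota> k (\<lambda>x. \<phi> (\<delta> x) - \<delta> (\<phi> x))"
proof (induction k arbitrary: \<phi>)
  case 0
  then obtain a where a: "\<phi> = (\<lambda>x. a * x)" by (auto elim!: diff_le_0E)
  have "(\<lambda>x. \<phi> (\<delta> x) - \<delta> (\<phi> x)) = (\<lambda>x. (- \<delta> a) * x)"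
    using 0 by (auto simp: a Der_mult algebra_simps)
  then show ?case using diff_le_0_mult[of \<iota> "- \<delta> a"] by metis
next
  case (Suc k)
  have kl: "klinear \<iota> (\<lambda>x. \<phi> (\<delta> x) - \<delta> (\<phi> x))"
    using klinear_minus[OF klinear_comp klinear_comp, of \<iota> \<phi> \<delta> \<delta> \<phi>] Suc.prems
    by (simp add: diff_le_klinear Der_klinear comp_def)
  have ph: "\<And>x y. \<phi> (x + y) = \<phi> x + \<phi> y" using diff_le_additive[OF Suc.prems(2)] .
  have eq: "bracket (\<lambda>x. \<phi> (\<delta> x) - \<delta> (\<phi> x)) b =
     (\<lambda>x. (bracket \<phi> b (\<delta> x) - \<delta> (bracket \<phi> b x)) + bracket \<phi> (\<delta> b) x)" for b
  proof
    fix x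
    have A: "\<phi> (\<delta> (b * x)) = \<phi> (b * \<delta> x) + \<phi> (\<delta> b * x)"
      using Der_mult[OF Suc.prems(1), of b x] ph by (simp add: mult.commute)
    have "\<phi> (b * x) = bracket \<phi> b x + b * \<phi> x" by (simp add: bracket_def)
    then have B: "\<delta> (\<phi> (b * x)) = \<delta> (bracket \<phi> b x) + b * \<delta> (\<phi> x) + \<phi> x * \<delta> b"
      using Der_add[OF Suc.prems(1)] Der_mult[OF Suc.prems(1)] by simp
    show "bracket (\<lambda>x. \<phi> (\<delta> x) - \<delta> (\<phi> x)) b x =
        (bracket \<phi> b (\<delta> x) - \<delta> (bracket \<phi> b x)) + bracket \<phi> (\<delta> b) x"
      by (simp only: bracket_def A B) (simp add: algebra_simps)
  qed
  have "diff_le \<iota> k (\<lambda>x. (bracket \<phi> b (\<delta> x) - \<delta> (bracket \<phi> b x)) + bracket \<phi> (\<delta> b) x)" for b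
    using Suc.prems by (intro diff_le_plus Suc.IH) (auto simp: diff_le_Suc_bracket)
  then show ?case by (simp add: diff_le_Suc_bracket kl eq)
qed

text \<open>Reordering the factors of a composite of derivations changes it only in lower
  order; this is why gr Diff is commutative.\<close>
lemma comp_list_perm_lower:
  "set xs \<subseteq> Der \<iota> \<Longrightarrow> mset ys = mset xs \<Longrightarrow> xs \<noteq> [] \<Longrightarrow>
   diff_le \<iota> (length xs - 1) (\<lambda>x. comp_list xs x - comp_list ys x)"
proof (induction xs arbitrary: ys)
  case Nil then show ?case by simp
next
  case (Cons d xs)
  have d: "d \<in> Der \<iota>" and xsD: "set xs \<subseteq> Der \<iota>" using Cons.prems by auto
  have "d \<in> set ys" using Cons.prems(2) by (metis list.set_intros(1) set_mset_mset)
  then obtain ys1 ys2 where ys: "ys = ys1 @ d # ys2" by (meson split_list)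
  have m: "mset (ys1 @ ys2) = mset xs" using Cons.prems(2) ys by simp
  have ysD: "set (ys1 @ ys2) \<subseteq> Der \<iota>" using xsD m by (metis set_mset_mset)
  have l: "length (ys1 @ ys2) = length xs" using m by (metis size_mset)
  text \<open>Reorder the tail by induction, then move d past ys1 by a commutator.\<close>
  have tail: "diff_le \<iota> (length xs) (\<lambda>x. d (comp_list xs x) - d (comp_list (ys1 @ ys2) x))"
  proof (cases "xs = []")
    case True
    then show ?thesis using l by (simp add: diff_le_zero)
  next
    case False
    have "diff_le \<iota> (1 + (length xs - 1)) (d \<circ> (\<lambda>x. comp_list xs x - comp_list (ys1 @ ys2) x))"
      by (rule diff_le_comp[OF Der_order_one[OF d] Cons.IH[OF xsD m False]])
    then show ?thesis using False by (simp add: comp_def Der_diff[OF d])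
  qed
  have commute: "diff_le \<iota> (length xs) (\<lambda>x. d (comp_list (ys1 @ ys2) x) - comp_list ys x)"
  proof -
    have "diff_le \<iota> (length ys1) (\<lambda>x. comp_list ys1 (d x) - d (comp_list ys1 x))"
      using ysD by (intro diff_le_commutator[OF d] diff_le_comp_list) auto
    then have "diff_le \<iota> (length ys1 + length ys2)
        ((\<lambda>x. comp_list ys1 (d x) - d (comp_list ys1 x)) \<circ> comp_list ys2)"
      using ysD by (intro diff_le_comp diff_le_comp_list) auto
    then have "diff_le \<iota> (length xs)
        (\<lambda>x. - (comp_list ys1 (d (comp_list ys2 x)) - d (comp_list ys1 (comp_list ys2 x))))"
      using l by (intro diff_le_neg) (simp add: comp_def)
    then show ?thesis by (simp add: ys comp_list_append)
  qed
  show ?case using diff_le_plus[OF tail commute] by simp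
qed

section \<open>The principal symbol\<close>

definition symbol :: "('a \<Rightarrow> 'a) \<Rightarrow> 'a list \<Rightarrow> 'a::comm_ring_1" where
  "symbol \<phi> as = brackets \<phi> as 1"

lemma symbol_perm: "mset as = mset bs \<Longrightarrow> symbol \<phi> as = symbol \<phi> bs"
  unfolding symbol_def using brackets_perm by metis

lemma symbol_sum:
  "symbol (\<lambda>x. \<Sum>i\<in>S. g i * f i x) as = (\<Sum>i\<in>S. g i * symbol (f i) as)"
  by (simp add: symbol_def brackets_sum)

lemma symbol_smult: "symbol (\<lambda>x. c * \<phi> x) as = c * symbol \<phi> as"
  by (simp add: symbol_def brackets_smult)

lemma symbol_minus: "symbol (\<lambda>x. \<phi> x - \<psi> x) as = symbol \<phi> as - symbol \<psi> as"
  by (simp add: symbol_def brackets_minus)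

lemma brackets_zero[simp]: "brackets (\<lambda>x. 0) as = (\<lambda>x. 0)"
  by (induction as) (auto simp: bracket_def)

lemma diff_le_brackets:
  "diff_le \<iota> n \<phi> \<Longrightarrow> length as \<le> n \<Longrightarrow> diff_le \<iota> (n - length as) (brackets \<phi> as)"
proof (induction as arbitrary: \<phi> n)
  case Nil then show ?case by simp
next
  case (Cons a as)
  then obtain n' where n: "n = Suc n'" by (cases n) auto
  with Cons show ?case by (auto simp: diff_le_Suc_bracket)
qed

lemma brackets_full:
  "diff_le \<iota> n \<phi> \<Longrightarrow> length as = n \<Longrightarrow> brackets \<phi> as = (\<lambda>x. symbol \<phi> as * x)"
  using diff_le_brackets[of \<iota> n \<phi> as] by (auto simp: symbol_def elim!: diff_le_0E)

lemma brackets_vanish: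
  "diff_le \<iota> n \<phi> \<Longrightarrow> length as > n \<Longrightarrow> brackets \<phi> as = (\<lambda>x. 0)"
proof -
  assume a: "diff_le \<iota> n \<phi>" "length as > n"
  then have as: "as = take n as @ as ! n # drop (Suc n) as" "length (take n as) = n"
    by (auto simp: id_take_nth_drop)
  have "brackets \<phi> as = brackets (bracket (brackets \<phi> (take n as)) (as ! n)) (drop (Suc n) as)"
    by (subst as(1)) (simp add: brackets_append)
  also have "\<dots> = (\<lambda>x. 0)" by (simp add: brackets_full[OF a(1) as(2)])
  finally show ?thesis .
qed

lemma symbol_vanish: "diff_le \<iota> n \<phi> \<Longrightarrow> length as > n \<Longrightarrow> symbol \<phi> as = 0"
  by (simp add: symbol_def brackets_vanish)

lemma diff_le_symbol_zero:
  "diff_le \<iota> (Suc n) \<phi> \<Longrightarrow> (\<And>as. length as = Suc n \<Longrightarrow> symbol \<phi> as = 0) \<Longrightarrow> diff_le \<iota> n \<phi>"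
proof (induction n arbitrary: \<phi>)
  case 0
  have "\<phi> a = \<phi> 1 * a" for a
    using "0.prems"(2)[of "[a]"] by (simp add: symbol_def bracket_def mult.commute)
  then have "\<phi> = (\<lambda>x. \<phi> 1 * x)" by (rule ext)
  then show ?case by (metis diff_le_0_mult)
next
  case (Suc n)
  have "diff_le \<iota> n (bracket \<phi> a)" for a
  proof (rule Suc.IH)
    show "diff_le \<iota> (Suc n) (bracket \<phi> a)" using Suc.prems(1) by (simp add: diff_le_Suc_bracket)
    show "symbol (bracket \<phi> a) as = 0" if "length as = Suc n" for as
      using Suc.prems(2)[of "a # as"] that by (simp add: symbol_def)
  qed
  then show ?case using Suc.prems(1) by (simp add: diff_le_Suc_bracket)
qed

lemma diff_lower_iff_symbol_zero:
  assumes "diff_le \<iota> n \<phi>"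
  shows "diff_lower \<iota> n \<phi> \<longleftrightarrow> (\<forall>as. length as = n \<longrightarrow> symbol \<phi> as = 0)"
proof (cases n)
  case 0
  then obtain a where "\<phi> = (\<lambda>x. a * x)" using assms by (auto elim: diff_le_0E)
  then show ?thesis using 0 by (auto simp: diff_lower_def symbol_def fun_eq_iff) (metis mult_1_right)
next
  case (Suc k)
  then show ?thesis
    using assms diff_le_symbol_zero[of \<iota> k \<phi>] symbol_vanish[of \<iota> k \<phi>]
    by (auto simp: diff_lower_def)
qed

lemma order_one_symbol_Der: "diff_le \<iota> 1 \<psi> \<Longrightarrow> (\<lambda>b. bracket \<psi> b 1) \<in> Der \<iota>"
proof -
  assume a: "diff_le \<iota> 1 \<psi>"
  have kl: "klinear \<iota> \<psi>" using a by (simp add: diff_le_Suc_bracket)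
  have m: "\<psi> (b * x) = b * \<psi> x + (\<psi> b - b * \<psi> 1) * x" for b x
  proof -
    have "diff_le \<iota> 0 (bracket \<psi> b)" using a by (simp add: diff_le_Suc_bracket)
    then have "bracket \<psi> b x = bracket \<psi> b 1 * x" by (auto elim!: diff_le_0E)
    then show ?thesis by (simp add: bracket_def algebra_simps)
  qed
  have add: "\<psi> (x + y) = \<psi> x + \<psi> y" and hom: "\<psi> (\<iota> c * x) = \<iota> c * \<psi> x" for x y c
    using kl by (simp_all add: klinear_def)
  show ?thesis unfolding Der_iff
  proof (intro conjI allI)
    fix x y
    show "bracket \<psi> (x + y) 1 = bracket \<psi> x 1 + bracket \<psi> y 1"
      by (simp add: bracket_def add algebra_simps)
    show "bracket \<psi> (x * y) 1 = x * bracket \<psi> y 1 + y * bracket \<psi> x 1"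
      using m[of x y] by (simp add: bracket_def algebra_simps)
  next
    fix c x
    show "bracket \<psi> (\<iota> c * x) 1 = \<iota> c * bracket \<psi> x 1"
      by (simp add: bracket_def hom right_diff_distrib mult.assoc)
  qed
qed

lemma symbol_Der:
  "diff_le \<iota> n \<phi> \<Longrightarrow> length as + length bs + 1 = n \<Longrightarrow> (\<lambda>b. symbol \<phi> (as @ b # bs)) \<in> Der \<iota>"
proof -
  assume a: "diff_le \<iota> n \<phi>" "length as + length bs + 1 = n"
  have "diff_le \<iota> (n - length (as @ bs)) (brackets \<phi> (as @ bs))"
    using diff_le_brackets[OF a(1), of "as @ bs"] a(2) by simp
  moreover have "n - length (as @ bs) = 1" using a(2) by simp
  ultimately have "diff_le \<iota> 1 (brackets \<phi> (as @ bs))" by metis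
  from order_one_symbol_Der[OF this]
  have "(\<lambda>b. symbol \<phi> ((as @ bs) @ [b])) \<in> Der \<iota>" by (simp add: symbol_def brackets_append)
  moreover have "symbol \<phi> (as @ b # bs) = symbol \<phi> ((as @ bs) @ [b])" for b
    by (rule symbol_perm) simp
  ultimately show ?thesis by simp
qed

definition remove_nth :: "nat \<Rightarrow> 'b list \<Rightarrow> 'b list" where
  "remove_nth i xs = take i xs @ drop (Suc i) xs"

lemma remove_nth_0_Cons[simp]: "remove_nth 0 (a # as) = as"
  by (simp add: remove_nth_def)

lemma remove_nth_Suc_Cons[simp]: "remove_nth (Suc i) (a # as) = a # remove_nth i as"
  by (simp add: remove_nth_def)

lemma length_remove_nth: "i < length xs \<Longrightarrow> length (remove_nth i xs) = length xs - 1"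
  by (simp add: remove_nth_def)

lemma set_remove_nth: "set (remove_nth i xs) \<subseteq> set xs"
  unfolding remove_nth_def using set_take_subset[of i xs] set_drop_subset[of "Suc i" xs] by auto

lemma mset_remove_nth: "i < length xs \<Longrightarrow> mset (xs ! i # remove_nth i xs) = mset xs"
proof -
  assume "i < length xs"
  then have "xs = take i xs @ xs ! i # drop (Suc i) xs" by (rule id_take_nth_drop)
  then have "mset xs = mset (take i xs @ xs ! i # drop (Suc i) xs)" by (rule arg_cong)
  then show ?thesis by (simp add: remove_nth_def)
qed

text \<open>The permanent of the matrix (d_i(a_j)): the symbol of d_1 \<circ> \<dots> \<circ> d_n, i.e. the image
  of d_1 \<cdots> d_n under Sym^n Der(A) \<rightarrow> symmetric multiderivations.\<close>
fun der_perm :: "('a \<Rightarrow> 'a) list \<Rightarrow> 'a list \<Rightarrow> 'a::comm_ring_1" where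
  "der_perm [] as = (if as = [] then 1 else 0)"
| "der_perm (d # ds) as = (\<Sum>i<length as. d (as ! i) * der_perm ds (remove_nth i as))"

text \<open>Brackets of d \<circ> \<psi>: each bracket either hits d (giving d(a_i)) or passes to \<psi>.\<close>
lemma brackets_comp_Der:
  "d \<in> Der \<iota> \<Longrightarrow> brackets (d \<circ> \<psi>) as =
     (\<lambda>x. (\<Sum>i<length as. d (as ! i) * brackets \<psi> (remove_nth i as) x) + d (brackets \<psi> as x))"
proof (induction as arbitrary: \<psi>)
  case Nil then show ?case by simp
next
  case (Cons a as)
  have bk: "bracket (d \<circ> \<psi>) a = (\<lambda>x. d a * \<psi> x + (d \<circ> bracket \<psi> a) x)"
  proof
    fix x
    have e: "d (bracket \<psi> a x) = d (\<psi> (a * x)) - (a * d (\<psi> x) + \<psi> x * d a)"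
      unfolding bracket_def by (simp only: Der_diff[OF Cons.prems] Der_mult[OF Cons.prems])
    show "bracket (d \<circ> \<psi>) a x = d a * \<psi> x + (d \<circ> bracket \<psi> a) x"
      by (simp only: o_apply e) (simp add: bracket_def algebra_simps)
  qed
  have "brackets (d \<circ> \<psi>) (a # as) = (\<lambda>x. d a * brackets \<psi> as x + brackets (d \<circ> bracket \<psi> a) as x)"
    by (simp add: bk brackets_plus brackets_smult del: o_apply)
  also have "\<dots> = (\<lambda>x. d a * brackets \<psi> as x
      + ((\<Sum>i<length as. d (as ! i) * brackets (bracket \<psi> a) (remove_nth i as) x)
      + d (brackets (bracket \<psi> a) as x)))"
    by (simp only: Cons.IH[OF Cons.prems])
  also have "\<dots> = (\<lambda>x. (\<Sum>i<length (a # as). d ((a # as) ! i) * brackets \<psi> (remove_nth i (a # as)) x)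
      + d (brackets \<psi> (a # as) x))"
    unfolding length_Cons sum.lessThan_Suc_shift by (simp add: add.assoc)
  finally show ?case .
qed

lemma symbol_comp_list:
  "set ds \<subseteq> Der \<iota> \<Longrightarrow> length as = length ds \<Longrightarrow> symbol (comp_list ds) as = der_perm ds as"
proof (induction ds arbitrary: as)
  case Nil then show ?case by (simp add: symbol_def)
next
  case (Cons d ds)
  have d: "d \<in> Der \<iota>" and ds: "set ds \<subseteq> Der \<iota>" using Cons.prems by auto
  have "brackets (comp_list ds) as = (\<lambda>x. 0)"
    using brackets_vanish[OF diff_le_comp_list[OF ds]] Cons.prems by simp
  then have "symbol (comp_list (d # ds)) as
      = (\<Sum>i<length as. d (as ! i) * symbol (comp_list ds) (remove_nth i as))"
    using brackets_comp_Der[OF d, of "comp_list ds" as] Der_zero[OF d] by (simp add: symbol_def)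
  also have "\<dots> = (\<Sum>i<length as. d (as ! i) * der_perm ds (remove_nth i as))"
    using Cons.IH[OF ds] Cons.prems by (intro sum.cong) (simp_all add: length_remove_nth)
  finally show ?case by (simp add: comp_def)
qed

lemma der_perm_expand_first_arg:
  "der_perm ds (b # bs) = (\<Sum>k<length ds. (ds ! k) b * der_perm (remove_nth k ds) bs)"
proof (induction ds arbitrary: b bs)
  case Nil then show ?case by simp
next
  case (Cons d ds)
  have "der_perm (d # ds) (b # bs) = d b * der_perm ds bs
      + (\<Sum>i<length bs. d (bs ! i) * der_perm ds (b # remove_nth i bs))"
    unfolding der_perm.simps length_Cons sum.lessThan_Suc_shift by simp
  also have "\<dots> = d b * der_perm ds bs + (\<Sum>i<length bs. \<Sum>k<length ds.
      d (bs ! i) * ((ds ! k) b * der_perm (remove_nth k ds) (remove_nth i bs)))"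
    by (simp add: Cons.IH sum_distrib_left)
  also have "\<dots> = d b * der_perm ds bs + (\<Sum>k<length ds. \<Sum>i<length bs.
      (ds ! k) b * (d (bs ! i) * der_perm (remove_nth k ds) (remove_nth i bs)))"
    by (subst sum.swap) (simp only: mult.left_commute)
  also have "\<dots> = d b * der_perm ds bs + (\<Sum>k<length ds. (ds ! k) b * der_perm (d # remove_nth k ds) bs)"
    by (simp only: der_perm.simps(2) sum_distrib_left)
  also have "\<dots> = (\<Sum>k<length (d # ds). ((d # ds) ! k) b * der_perm (remove_nth k (d # ds)) bs)"
    unfolding length_Cons sum.lessThan_Suc_shift by simp
  finally show ?case .
qed

section \<open>Symmetric multiderivations\<close>

definition multider :: "('k::comm_ring_1 \<Rightarrow> 'a::comm_ring_1) \<Rightarrow> nat \<Rightarrow> ('a list \<Rightarrow> 'a) \<Rightarrow> bool" where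
  "multider \<iota> n F \<longleftrightarrow> (\<forall>as bs. length as + length bs + 1 = n \<longrightarrow> (\<lambda>b. F (as @ b # bs)) \<in> Der \<iota>)"

definition perm_invariant :: "('a list \<Rightarrow> 'b) \<Rightarrow> bool" where
  "perm_invariant F \<longleftrightarrow> (\<forall>xs ys. mset xs = mset ys \<longrightarrow> F xs = F ys)"

lemma multider_first:
  assumes "multider \<iota> (Suc n) F" and "length bs = n"
  shows "(\<lambda>b. F (b # bs)) \<in> Der \<iota>"
  using assms(1)[unfolded multider_def, rule_format, of "[]" bs] assms(2) by simp

lemma symbol_multider: "diff_le \<iota> n \<phi> \<Longrightarrow> multider \<iota> n (symbol \<phi>)"
  unfolding multider_def using symbol_Der by blast

lemma symbol_perm_invariant: "perm_invariant (symbol \<phi>)"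
  unfolding perm_invariant_def using symbol_perm by blast

lemma der_perm_multider: "set ds \<subseteq> Der \<iota> \<Longrightarrow> length ds = n \<Longrightarrow> multider \<iota> n (der_perm ds)"
  unfolding multider_def
proof (intro allI impI)
  fix as bs :: "'a list"
  assume ds: "set ds \<subseteq> Der \<iota>" "length ds = n" and l: "length as + length bs + 1 = n"
  have "(\<lambda>b. symbol (comp_list ds) (as @ b # bs)) \<in> Der \<iota>"
    using symbol_Der[OF diff_le_comp_list[OF ds(1)]] ds(2) l by simp
  moreover have "symbol (comp_list ds) (as @ b # bs) = der_perm ds (as @ b # bs)" for b
    using symbol_comp_list[OF ds(1)] ds(2) l by simp
  ultimately show "(\<lambda>b. der_perm ds (as @ b # bs)) \<in> Der \<iota>" by simp
qed

section \<open>Der(A) as a retract of a finite free module\<close>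

text \<open>The images of the unit vectors
  generate Der(A), and s provides coordinates with respect to them.\<close>
locale Der_retract =
  fixes \<iota> :: "'k::comm_ring_1 \<Rightarrow> 'a::comm_ring_1"
    and m :: nat
    and s :: "('a \<Rightarrow> 'a) \<Rightarrow> nat \<Rightarrow> 'a"
    and p :: "(nat \<Rightarrow> 'a) \<Rightarrow> 'a \<Rightarrow> 'a"
  assumes s_in: "\<And>\<delta>. \<delta> \<in> Der \<iota> \<Longrightarrow> s \<delta> \<in> free_fin m"
    and p_in: "\<And>v. v \<in> free_fin m \<Longrightarrow> p v \<in> Der \<iota>"
    and s_add: "\<And>\<delta> \<delta>'. \<delta> \<in> Der \<iota> \<Longrightarrow> \<delta>' \<in> Der \<iota> \<Longrightarrow> s (\<lambda>x. \<delta> x + \<delta>' x) = (\<lambda>i. s \<delta> i + s \<delta>' i)"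
    and s_smult: "\<And>\<delta> a. \<delta> \<in> Der \<iota> \<Longrightarrow> s (\<lambda>x. a * \<delta> x) = (\<lambda>i. a * s \<delta> i)"
    and p_add: "\<And>v w. v \<in> free_fin m \<Longrightarrow> w \<in> free_fin m \<Longrightarrow> p (\<lambda>i. v i + w i) = (\<lambda>x. p v x + p w x)"
    and p_smult: "\<And>v a. v \<in> free_fin m \<Longrightarrow> p (\<lambda>i. a * v i) = (\<lambda>x. a * p v x)"
    and p_s: "\<And>\<delta>. \<delta> \<in> Der \<iota> \<Longrightarrow> p (s \<delta>) = \<delta>"
begin

definition unit_vec :: "nat \<Rightarrow> nat \<Rightarrow> 'a" where
  "unit_vec j = (\<lambda>i. if i = j then 1 else 0)"

definition gen :: "nat \<Rightarrow> 'a \<Rightarrow> 'a" where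
  "gen j = p (unit_vec j)"

lemma free_fin_sum:
  "finite S \<Longrightarrow> (\<And>j. j \<in> S \<Longrightarrow> v j \<in> free_fin m) \<Longrightarrow> (\<lambda>i. \<Sum>j\<in>S. g j * v j i) \<in> free_fin m"
  by (induction S rule: finite_induct) (auto simp: free_fin_def)

lemma free_fin_smult: "v \<in> free_fin m \<Longrightarrow> (\<lambda>i. a * v i) \<in> free_fin m"
  by (simp add: free_fin_def)

lemma unit_vec_in: "j < m \<Longrightarrow> unit_vec j \<in> free_fin m"
  by (simp add: free_fin_def unit_vec_def)

lemma gen_Der: "j < m \<Longrightarrow> gen j \<in> Der \<iota>"
  unfolding gen_def by (rule p_in[OF unit_vec_in])

lemma p_sum:
  "finite S \<Longrightarrow> (\<And>j. j \<in> S \<Longrightarrow> v j \<in> free_fin m) \<Longrightarrow>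
   p (\<lambda>i. \<Sum>j\<in>S. g j * v j i) = (\<lambda>x. \<Sum>j\<in>S. g j * p (v j) x)"
proof (induction S rule: finite_induct)
  case empty
  have z: "(\<lambda>i. 0) \<in> free_fin m" by (simp add: free_fin_def)
  have "p (\<lambda>i. 0 * 0) = (\<lambda>x. 0 * p (\<lambda>i. 0) x)" by (rule p_smult[OF z])
  then show ?case by simp
next
  case (insert j S)
  have vj: "v j \<in> free_fin m" using insert by simp
  have vS: "(\<lambda>i. \<Sum>j\<in>S. g j * v j i) \<in> free_fin m" using insert by (intro free_fin_sum) auto
  have "p (\<lambda>i. \<Sum>j\<in>insert j S. g j * v j i) = p (\<lambda>i. g j * v j i + (\<Sum>j\<in>S. g j * v j i))"
    using insert by simp
  also have "\<dots> = (\<lambda>x. p (\<lambda>i. g j * v j i) x + p (\<lambda>i. \<Sum>j\<in>S. g j * v j i) x)"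
    by (rule p_add[OF free_fin_smult[OF vj] vS])
  also have "\<dots> = (\<lambda>x. g j * p (v j) x + (\<Sum>j\<in>S. g j * p (v j) x))"
    using insert by (simp add: p_smult[OF vj])
  also have "\<dots> = (\<lambda>x. \<Sum>j\<in>insert j S. g j * p (v j) x)"
    using insert by simp
  finally show ?case .
qed

lemma s_sum:
  "finite S \<Longrightarrow> (\<And>i. i \<in> S \<Longrightarrow> d i \<in> Der \<iota>) \<Longrightarrow>
   s (\<lambda>x. \<Sum>i\<in>S. g i * d i x) = (\<lambda>j. \<Sum>i\<in>S. g i * s (d i) j)"
proof (induction S rule: finite_induct)
  case empty
  have "s (\<lambda>x. 0 * 0) = (\<lambda>i. 0 * s (\<lambda>x. 0) i)" by (rule s_smult[OF Der_zero_map])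
  then show ?case by simp
next
  case (insert i S)
  have di: "d i \<in> Der \<iota>" using insert by simp
  have dS: "(\<lambda>x. \<Sum>i\<in>S. g i * d i x) \<in> Der \<iota>" using insert by (intro Der_sum) auto
  have "s (\<lambda>x. \<Sum>i\<in>insert i S. g i * d i x) = s (\<lambda>x. g i * d i x + (\<Sum>i\<in>S. g i * d i x))"
    using insert by simp
  also have "\<dots> = (\<lambda>j. s (\<lambda>x. g i * d i x) j + s (\<lambda>x. \<Sum>i\<in>S. g i * d i x) j)"
    by (rule s_add[OF Der_smult[OF di] dS])
  also have "\<dots> = (\<lambda>j. g i * s (d i) j + (\<Sum>i\<in>S. g i * s (d i) j))"
    using insert by (simp add: s_smult[OF di])
  also have "\<dots> = (\<lambda>j. \<Sum>i\<in>insert i S. g i * s (d i) j)"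
    using insert by simp
  finally show ?case .
qed

lemma Der_expand: "\<delta> \<in> Der \<iota> \<Longrightarrow> \<delta> x = (\<Sum>j<m. s \<delta> j * gen j x)"
proof -
  assume d: "\<delta> \<in> Der \<iota>"
  have "(\<Sum>j<m. s \<delta> j * unit_vec j i) = (if i < m then s \<delta> i else 0)" for i
    by (simp add: unit_vec_def if_distrib[of "\<lambda>t. s \<delta> _ * t"] sum.delta' cong: if_cong)
  then have "s \<delta> = (\<lambda>i. \<Sum>j<m. s \<delta> j * unit_vec j i)"
    using s_in[OF d] by (auto simp: free_fin_def)
  then have "\<delta> = p (\<lambda>i. \<Sum>j<m. s \<delta> j * unit_vec j i)" using p_s[OF d] by metis
  also have "\<dots> = (\<lambda>x. \<Sum>j<m. s \<delta> j * gen j x)"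
    unfolding gen_def by (rule p_sum) (auto intro: unit_vec_in)
  finally show ?thesis by (rule fun_cong)
qed
end

context Der_retract
begin

text \<open>This is F evaluated at the "dual basis" of the generators.\<close>
fun coord :: "('a list \<Rightarrow> 'a) \<Rightarrow> nat list \<Rightarrow> 'a" where
  "coord F [] = F []"
| "coord F (j # J) = coord (\<lambda>bs. s (\<lambda>b. F (b # bs)) j) J"

lemma s_family_Der:
  assumes h1: "\<And>c. H c \<in> Der \<iota>" and h2: "\<And>b. (\<lambda>c. H c b) \<in> Der \<iota>"
  shows "(\<lambda>c. s (H c) j) \<in> Der \<iota>"
proof -
  have add: "H (x + y) = (\<lambda>b. H x b + H y b)" for x y
    using Der_add[OF h2] by (simp add: fun_eq_iff)
  have hom: "H (\<iota> c * x) = (\<lambda>b. \<iota> c * H x b)" for c x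
    using Der_hom[OF h2] by (simp add: fun_eq_iff)
  have mul: "H (x * y) = (\<lambda>b. x * H y b + y * H x b)" for x y
    using Der_mult[OF h2] by (simp add: fun_eq_iff)
  show ?thesis unfolding Der_iff
  proof (intro conjI allI)
    fix x y
    show "s (H (x + y)) j = s (H x) j + s (H y) j"
      unfolding add s_add[OF h1 h1] by simp
    show "s (H (x * y)) j = x * s (H y) j + y * s (H x) j"
      unfolding mul s_add[OF Der_smult[OF h1] Der_smult[OF h1]] s_smult[OF h1] by simp
  next
    fix c x
    show "s (H (\<iota> c * x)) j = \<iota> c * s (H x) j"
      unfolding hom s_smult[OF h1] by simp
  qed
qed

lemma multider_coord_step:
  "multider \<iota> (Suc n) F \<Longrightarrow> multider \<iota> n (\<lambda>bs. s (\<lambda>b. F (b # bs)) j)"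
  unfolding multider_def
proof (intro allI impI)
  fix as bs :: "'a list"
  assume F: "\<forall>as bs. length as + length bs + 1 = Suc n \<longrightarrow> (\<lambda>b. F (as @ b # bs)) \<in> Der \<iota>"
    and l: "length as + length bs + 1 = n"
  have h1: "(\<lambda>b. F (b # as @ c # bs)) \<in> Der \<iota>" for c
    using F[rule_format, of "[]" "as @ c # bs"] l by simp
  have h2: "(\<lambda>c. F (b # as @ c # bs)) \<in> Der \<iota>" for b
    using F[rule_format, of "b # as" bs] l by simp
  show "(\<lambda>c. s (\<lambda>b. F (b # as @ c # bs)) j) \<in> Der \<iota>"
    by (rule s_family_Der[of "\<lambda>c b. F (b # as @ c # bs)", OF h1 h2])
qed

lemma perm_invariant_coord_step:
  "perm_invariant F \<Longrightarrow> perm_invariant (\<lambda>bs. s (\<lambda>b. F (b # bs)) j)"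
  unfolding perm_invariant_def
proof (intro allI impI)
  fix xs ys :: "'a list"
  assume F: "\<forall>xs ys. mset xs = mset ys \<longrightarrow> F xs = F ys" and m: "mset xs = mset ys"
  have "F (b # xs) = F (b # ys)" for b using F m by simp
  then show "s (\<lambda>b. F (b # xs)) j = s (\<lambda>b. F (b # ys)) j" by simp
qed

lemma coord_cong:
  "(\<And>bs. length bs = length J \<Longrightarrow> F1 bs = F2 bs) \<Longrightarrow> coord F1 J = coord F2 J"
proof (induction J arbitrary: F1 F2)
  case Nil then show ?case by simp
next
  case (Cons j J)
  have "(\<lambda>b. F1 (b # bs)) = (\<lambda>b. F2 (b # bs))" if "length bs = length J" for bs
    using Cons.prems that by simp
  then show ?case by (simp only: coord.simps) (rule Cons.IH, simp)
qed

lemma coord_zero: "coord (\<lambda>bs. 0) J = 0"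
proof (induction J)
  case (Cons j J)
  have "s (\<lambda>b. 0 * 0) = (\<lambda>i. 0 * s (\<lambda>b. 0) i)" by (rule s_smult[OF Der_zero_map])
  then show ?case using Cons by simp
qed simp

lemma coord_linear:
  "finite S \<Longrightarrow> (\<And>i. i \<in> S \<Longrightarrow> multider \<iota> (length J) (F i)) \<Longrightarrow>
   coord (\<lambda>bs. \<Sum>i\<in>S. g i * F i bs) J = (\<Sum>i\<in>S. g i * coord (F i) J)"
proof (induction J arbitrary: F)
  case Nil then show ?case by simp
next
  case (Cons j J)
  have d: "(\<lambda>b. F i (b # bs)) \<in> Der \<iota>" if "i \<in> S" "length bs = length J" for i bs
    using multider_first[of \<iota> "length J" "F i" bs] Cons.prems(2)[OF that(1)] that(2) by simp
  have "coord (\<lambda>bs. \<Sum>i\<in>S. g i * F i bs) (j # J)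
      = coord (\<lambda>bs. \<Sum>i\<in>S. g i * s (\<lambda>b. F i (b # bs)) j) J"
    using s_sum[OF Cons.prems(1), of "\<lambda>i b. F i (b # _)" g] d by (simp cong: coord_cong)
  also have "\<dots> = (\<Sum>i\<in>S. g i * coord (\<lambda>bs. s (\<lambda>b. F i (b # bs)) j) J)"
    using Cons.prems(2) multider_coord_step by (intro Cons.IH[OF Cons.prems(1)]) auto
  finally show ?case by simp
qed

text \<open>Index lists of length n with entries < m; they index a spanning set of Sym^n Der(A).\<close>
definition index_lists :: "nat \<Rightarrow> nat list set" where
  "index_lists n = {J. set J \<subseteq> {..<m} \<and> length J = n}"

lemma finite_index_lists: "finite (index_lists n)"
  unfolding index_lists_def using finite_lists_length_eq[of "{..<m}" n] by simp

lemma index_lists_0: "index_lists 0 = {[]}"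
  by (auto simp: index_lists_def)

lemma sum_index_lists_Suc:
  "(\<Sum>J\<in>index_lists (Suc n). f J) = (\<Sum>j<m. \<Sum>J\<in>index_lists n. f (j # J))"
proof -
  have split: "index_lists (Suc n) = (\<lambda>(j, J). j # J) ` ({..<m} \<times> index_lists n)"
    by (auto simp: index_lists_def length_Suc_conv)
  have inj: "inj_on (\<lambda>(j, J). j # J) ({..<m} \<times> index_lists n)" by (auto simp: inj_on_def)
  show ?thesis
    unfolding split sum.reindex[OF inj] sum.cartesian_product by (simp add: case_prod_beta)
qed

lemma index_lists_Der: "J \<in> index_lists n \<Longrightarrow> set (map gen J) \<subseteq> Der \<iota>"
  unfolding index_lists_def using gen_Der by auto

lemma index_lists_length: "J \<in> index_lists n \<Longrightarrow> length J = n"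
  unfolding index_lists_def by auto

text \<open>This is where the characteristic-zero hypothesis will enter.\<close>
lemma multider_reconstruction:
  "multider \<iota> n F \<Longrightarrow> perm_invariant F \<Longrightarrow> length as = n \<Longrightarrow>
   (\<Sum>J\<in>index_lists n. coord F J * der_perm (map gen J) as) = of_nat (fact n) * F as"
proof (induction n arbitrary: F as)
  case 0 then show ?case by (simp add: index_lists_0)
next
  case (Suc n)
  define G where "G j = (\<lambda>bs. s (\<lambda>b. F (b # bs)) j)" for j
  have G: "multider \<iota> n (G j)" "perm_invariant (G j)" for j
    unfolding G_def using multider_coord_step[OF Suc.prems(1)] perm_invariant_coord_step[OF Suc.prems(2)]
    by auto
  have lr: "length (remove_nth i as) = n" if "i < Suc n" for i
    using Suc.prems(3) that by (simp add: length_remove_nth)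
  text \<open>Expanding der_perm along its first row and using the induction hypothesis \<dots>\<close>
  have row: "(\<Sum>J\<in>index_lists n. coord (G j) J * der_perm (gen j # map gen J) as)
      = (\<Sum>i<Suc n. gen j (as ! i) * (of_nat (fact n) * G j (remove_nth i as)))" for j
  proof -
    have "(\<Sum>J\<in>index_lists n. coord (G j) J * der_perm (gen j # map gen J) as)
        = (\<Sum>i<Suc n. gen j (as ! i) *
             (\<Sum>J\<in>index_lists n. coord (G j) J * der_perm (map gen J) (remove_nth i as)))"
      by (simp add: Suc.prems(3) sum_distrib_left mult.left_commute sum.swap[of _ "index_lists n"]
          del: sum.lessThan_Suc)
    then show ?thesis by (simp add: Suc.IH[OF G lr] del: sum.lessThan_Suc)
  qed
  text \<open>\<dots> and recombining each argument from its coordinates, every term becomes F as.\<close>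
  have recombine: "(\<Sum>j<m. G j (remove_nth i as) * gen j (as ! i)) = F as" if "i < Suc n" for i
  proof -
    have "(\<lambda>b. F (b # remove_nth i as)) \<in> Der \<iota>" by (rule multider_first[OF Suc.prems(1) lr[OF that]])
    then have "(\<Sum>j<m. G j (remove_nth i as) * gen j (as ! i)) = F (as ! i # remove_nth i as)"
      using Der_expand[of "\<lambda>b. F (b # remove_nth i as)" "as ! i"] unfolding G_def
      by (simp add: mult.commute)
    also have "\<dots> = F as"
      using Suc.prems(2) mset_remove_nth[of i as] Suc.prems(3) that
      unfolding perm_invariant_def by (metis Suc_le_eq le_refl)
    finally show ?thesis .
  qed
  have "(\<Sum>J\<in>index_lists (Suc n). coord F J * der_perm (map gen J) as)
      = (\<Sum>j<m. \<Sum>J\<in>index_lists n. coord (G j) J * der_perm (gen j # map gen J) as)"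
    by (simp add: sum_index_lists_Suc G_def del: der_perm.simps)
  also have "\<dots> = (\<Sum>j<m. \<Sum>i<Suc n. gen j (as ! i) * (of_nat (fact n) * G j (remove_nth i as)))"
    by (simp only: row)
  also have "\<dots> = (\<Sum>i<Suc n. of_nat (fact n) * (\<Sum>j<m. G j (remove_nth i as) * gen j (as ! i)))"
    by (subst sum.swap) (simp add: sum_distrib_left mult_ac del: sum.lessThan_Suc)
  also have "\<dots> = of_nat (fact (Suc n)) * F as"
    by (simp add: recombine algebra_simps del: sum.lessThan_Suc)
  finally show ?case .
qed

end

definition sym_cong :: "('k::comm_ring_1 \<Rightarrow> 'a::comm_ring_1) \<Rightarrow> nat \<Rightarrow>
    (('a \<Rightarrow> 'a) list \<Rightarrow> 'a) \<Rightarrow> (('a \<Rightarrow> 'a) list \<Rightarrow> 'a) \<Rightarrow> bool" where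
  "sym_cong \<iota> n c d \<longleftrightarrow> sym_rel_p \<iota> n (\<lambda>zs. c zs - d zs)"

lemma sym_cong_refl: "sym_cong \<iota> n c c"
  unfolding sym_cong_def using sym_rel_p.zero by simp

lemma sym_cong_sym: "sym_cong \<iota> n c d \<Longrightarrow> sym_cong \<iota> n d c"
  unfolding sym_cong_def by (drule sym_rel_p.smult[where a="-1"]) (simp add: algebra_simps)

lemma sym_cong_trans: "sym_cong \<iota> n c d \<Longrightarrow> sym_cong \<iota> n d e \<Longrightarrow> sym_cong \<iota> n c e"
  unfolding sym_cong_def by (drule (1) sym_rel_p.add) simp

lemma sym_cong_add:
  "sym_cong \<iota> n c d \<Longrightarrow> sym_cong \<iota> n c' d' \<Longrightarrow>
   sym_cong \<iota> n (\<lambda>zs. c zs + c' zs) (\<lambda>zs. d zs + d' zs)"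
  unfolding sym_cong_def by (drule (1) sym_rel_p.add) (simp add: algebra_simps)

lemma sym_cong_smult: "sym_cong \<iota> n c d \<Longrightarrow> sym_cong \<iota> n (\<lambda>zs. a * c zs) (\<lambda>zs. a * d zs)"
  unfolding sym_cong_def by (drule sym_rel_p.smult[where a=a]) (simp add: algebra_simps)

lemma sym_rel_p_sum:
  "finite S \<Longrightarrow> (\<And>i. i \<in> S \<Longrightarrow> sym_rel_p \<iota> n (f i)) \<Longrightarrow>
   sym_rel_p \<iota> n (\<lambda>zs. \<Sum>i\<in>S. g i * f i zs)"
proof (induction S rule: finite_induct)
  case empty
  then show ?case using sym_rel_p.zero by simp
next
  case (insert i S)
  have "sym_rel_p \<iota> n (\<lambda>zs. (\<lambda>zs. g i * f i zs) zs + (\<lambda>zs. \<Sum>i\<in>S. g i * f i zs) zs)"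
    using insert by (intro sym_rel_p.add sym_rel_p.smult) auto
  then show ?case using insert by simp
qed

lemma sym_cong_sum:
  assumes "finite S" and "\<And>i. i \<in> S \<Longrightarrow> sym_cong \<iota> n (f i) (h i)"
  shows "sym_cong \<iota> n (\<lambda>zs. \<Sum>i\<in>S. g i * f i zs) (\<lambda>zs. \<Sum>i\<in>S. g i * h i zs)"
proof -
  have "sym_rel_p \<iota> n (\<lambda>zs. \<Sum>i\<in>S. g i * (\<lambda>zs. f i zs - h i zs) zs)"
    by (rule sym_rel_p_sum) (use assms in \<open>auto simp: sym_cong_def\<close>)
  then show ?thesis
    unfolding sym_cong_def by (simp add: right_diff_distrib sum_subtractf)
qed

lemma single_slot_sum:
  "finite S \<Longrightarrow> set xs \<subseteq> Der \<iota> \<Longrightarrow> set ys \<subseteq> Der \<iota> \<Longrightarrow> length xs + length ys + 1 = n \<Longrightarrow>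
   (\<And>i. i \<in> S \<Longrightarrow> d i \<in> Der \<iota>) \<Longrightarrow>
   sym_cong \<iota> n (single (xs @ [(\<lambda>x. \<Sum>i\<in>S. g i * d i x)] @ ys))
     (\<lambda>zs. \<Sum>i\<in>S. g i * single (xs @ [d i] @ ys) zs)"
proof (induction S rule: finite_induct)
  case empty
  from sym_rel_p.homogeneous[OF empty.prems(1,2) Der_zero_map empty.prems(3), of 0]
  show ?case by (simp add: sym_cong_def)
next
  case (insert i S)
  have di: "d i \<in> Der \<iota>" using insert by simp
  have dS: "(\<lambda>x. \<Sum>i\<in>S. g i * d i x) \<in> Der \<iota>" using insert by (intro Der_sum) auto
  text \<open>Split off the summand i by additivity, then pull out g i by homogeneity.\<close>
  have split: "sym_cong \<iota> n (single (xs @ [(\<lambda>x. g i * d i x + (\<Sum>i\<in>S. g i * d i x))] @ ys))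
     (\<lambda>zs. single (xs @ [(\<lambda>x. g i * d i x)] @ ys) zs + single (xs @ [(\<lambda>x. \<Sum>i\<in>S. g i * d i x)] @ ys) zs)"
    using sym_rel_p.additive[OF insert.prems(1,2) Der_smult[OF di] dS insert.prems(3)]
    by (simp add: sym_cong_def diff_diff_eq)
  have pull: "sym_cong \<iota> n (single (xs @ [(\<lambda>x. g i * d i x)] @ ys))
      (\<lambda>zs. g i * single (xs @ [d i] @ ys) zs)"
    unfolding sym_cong_def by (rule sym_rel_p.homogeneous[OF insert.prems(1,2) di insert.prems(3)])
  have "sym_cong \<iota> n (single (xs @ [(\<lambda>x. \<Sum>i\<in>S. g i * d i x)] @ ys))
      (\<lambda>zs. \<Sum>i\<in>S. g i * single (xs @ [d i] @ ys) zs)"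
    using insert by auto
  from sym_cong_trans[OF split sym_cong_add[OF pull this]] show ?case
    using insert by simp
qed

text \<open>Multiplying on the left by a derivation d: Sym^n \<rightarrow> Sym^(n+1) respects the relations.\<close>
definition prefix :: "('a \<Rightarrow> 'a) \<Rightarrow> (('a \<Rightarrow> 'a) list \<Rightarrow> 'a::comm_ring_1) \<Rightarrow> ('a \<Rightarrow> 'a) list \<Rightarrow> 'a" where
  "prefix d c = (\<lambda>zs. case zs of [] \<Rightarrow> 0 | z # zs' \<Rightarrow> if z = d then c zs' else 0)"

lemma prefix_single: "prefix d (single xs) = single (d # xs)"
  by (auto simp: prefix_def single_def fun_eq_iff split: list.split)

lemma prefix_pointwise:
  "f 0 0 = 0 \<Longrightarrow> prefix d (\<lambda>zs. f (c1 zs) (c2 zs)) = (\<lambda>zs. f (prefix d c1 zs) (prefix d c2 zs))"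
  by (auto simp: prefix_def fun_eq_iff split: list.split)

lemma prefix_sum: "prefix d (\<lambda>zs. \<Sum>i\<in>S. g i * c i zs) = (\<lambda>zs. \<Sum>i\<in>S. g i * prefix d (c i) zs)"
  unfolding prefix_def by (rule ext) (simp split: list.split)

lemma prefix_smult: "prefix d (\<lambda>zs. a * c zs) = (\<lambda>zs. a * prefix d c zs)"
  by (auto simp: prefix_def fun_eq_iff split: list.split)

lemma sym_rel_p_prefix: "sym_rel_p \<iota> n c \<Longrightarrow> d \<in> Der \<iota> \<Longrightarrow> sym_rel_p \<iota> (Suc n) (prefix d c)"
proof (induction rule: sym_rel_p.induct)
  case zero
  have "prefix d (\<lambda>zs. 0) = (\<lambda>zs. 0)" by (auto simp: prefix_def fun_eq_iff split: list.split)
  then show ?case using sym_rel_p.zero by simp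
next
  case (add c c')
  then show ?case using sym_rel_p.add[OF add.IH] by (simp add: prefix_pointwise[of "(+)"])
next
  case (smult c a)
  then show ?case using sym_rel_p.smult[OF smult.IH] by (simp add: prefix_smult)
next
  case (additive xs ys \<delta> \<delta>')
  then have "sym_rel_p \<iota> (Suc n) (\<lambda>zs. single ((d # xs) @ [(\<lambda>x. \<delta> x + \<delta>' x)] @ ys) zs
      - single ((d # xs) @ [\<delta>] @ ys) zs - single ((d # xs) @ [\<delta>'] @ ys) zs)"
    by (intro sym_rel_p.additive) auto
  then show ?case
    by (simp add: prefix_pointwise[of "(-)"] prefix_single)
next
  case (homogeneous xs ys \<delta> a)
  then have "sym_rel_p \<iota> (Suc n) (\<lambda>zs. single ((d # xs) @ [(\<lambda>x. a * \<delta> x)] @ ys) zs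
      - a * single ((d # xs) @ [\<delta>] @ ys) zs)"
    by (intro sym_rel_p.homogeneous) auto
  then show ?case by (simp add: prefix_pointwise[of "\<lambda>u v. u - a * v"] prefix_single)
next
  case (symmetric xs ys)
  then have "sym_rel_p \<iota> (Suc n) (\<lambda>zs. single (d # xs) zs - single (d # ys) zs)"
    by (intro sym_rel_p.symmetric) auto
  then show ?case by (simp add: prefix_pointwise[of "(-)"] prefix_single)
qed

lemma sym_cong_prefix:
  "sym_cong \<iota> n c c' \<Longrightarrow> d \<in> Der \<iota> \<Longrightarrow> sym_cong \<iota> (Suc n) (prefix d c) (prefix d c')"
  unfolding sym_cong_def by (drule (1) sym_rel_p_prefix) (simp add: prefix_pointwise[of "(-)"])

abbreviation finite_supp :: "(('a \<Rightarrow> 'a) list \<Rightarrow> 'a::comm_ring_1) \<Rightarrow> bool" where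
  "finite_supp c \<equiv> finite {xs. c xs \<noteq> 0}"

lemma finite_supp_single: "finite_supp (single A)"
  by (rule finite_subset[of _ "{A}"]) (auto simp: single_def)

lemma finite_supp_add: "finite_supp c \<Longrightarrow> finite_supp d \<Longrightarrow> finite_supp (\<lambda>zs. c zs + d zs)"
  by (rule finite_subset[of _ "{xs. c xs \<noteq> 0} \<union> {xs. d xs \<noteq> 0}"]) auto

lemma finite_supp_smult: "finite_supp c \<Longrightarrow> finite_supp (\<lambda>zs. a * c zs)"
  by (rule finite_subset[of _ "{xs. c xs \<noteq> 0}"]) auto

lemma finite_supp_diff: "finite_supp c \<Longrightarrow> finite_supp d \<Longrightarrow> finite_supp (\<lambda>zs. c zs - d zs)"
  using finite_supp_add[of c "\<lambda>zs. (-1) * d zs"] finite_supp_smult[of d "-1"] by simp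

lemma finite_supp_sum:
  "finite I \<Longrightarrow> (\<And>i. i \<in> I \<Longrightarrow> finite_supp (c i)) \<Longrightarrow> finite_supp (\<lambda>zs. \<Sum>i\<in>I. g i * c i zs)"
proof (induction I rule: finite_induct)
  case (insert i I)
  then show ?case
    using finite_supp_add[OF finite_supp_smult[of "c i" "g i"], of "\<lambda>zs. \<Sum>i\<in>I. g i * c i zs"] by simp
qed simp

lemma sym_free_iff:
  "c \<in> sym_free \<iota> n \<longleftrightarrow> finite_supp c \<and> (\<forall>xs. c xs \<noteq> 0 \<longrightarrow> length xs = n \<and> set xs \<subseteq> Der \<iota>)"
  by (simp add: sym_free_def)

lemma sym_free_smult: "c \<in> sym_free \<iota> n \<Longrightarrow> (\<lambda>zs. a * c zs) \<in> sym_free \<iota> n"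
  by (simp add: sym_free_iff finite_supp_smult) (metis mult_zero_right)

lemma tau_eq:
  "finite T \<Longrightarrow> {xs. c xs \<noteq> 0} \<subseteq> T \<Longrightarrow> tau c = (\<lambda>x. \<Sum>xs\<in>T. c xs * comp_list xs x)"
  unfolding tau_def by (rule ext, rule sum.mono_neutral_left) auto

lemma tau_single: "tau (single A) = comp_list A"
  using tau_eq[of "{A}" "single A"] by (auto simp: single_def)

lemma tau_add: "finite_supp c \<Longrightarrow> finite_supp d \<Longrightarrow> tau (\<lambda>zs. c zs + d zs) = (\<lambda>x. tau c x + tau d x)"
proof -
  assume a: "finite_supp c" "finite_supp d"
  let ?T = "{xs. c xs \<noteq> 0} \<union> {xs. d xs \<noteq> 0}"
  have "finite ?T" using a by simp
  then have "tau (\<lambda>zs. c zs + d zs) = (\<lambda>x. \<Sum>xs\<in>?T. (c xs + d xs) * comp_list xs x)"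
    and "tau c = (\<lambda>x. \<Sum>xs\<in>?T. c xs * comp_list xs x)"
    and "tau d = (\<lambda>x. \<Sum>xs\<in>?T. d xs * comp_list xs x)"
    by (rule tau_eq; auto)+
  then show ?thesis by (simp add: distrib_right sum.distrib)
qed

lemma tau_smult: "finite_supp c \<Longrightarrow> tau (\<lambda>zs. a * c zs) = (\<lambda>x. a * tau c x)"
proof -
  assume a: "finite_supp c"
  have "tau (\<lambda>zs. a * c zs) = (\<lambda>x. \<Sum>xs\<in>{xs. c xs \<noteq> 0}. (a * c xs) * comp_list xs x)"
    by (rule tau_eq[OF a]) auto
  then show ?thesis by (simp add: tau_def sum_distrib_left mult.assoc)
qed

lemma tau_diff: "finite_supp c \<Longrightarrow> finite_supp d \<Longrightarrow> tau (\<lambda>zs. c zs - d zs) = (\<lambda>x. tau c x - tau d x)"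
  using tau_add[of c "\<lambda>zs. (-1) * d zs"] tau_smult[of d "-1"] finite_supp_smult[of d "-1"] by simp

lemma tau_sum:
  "finite I \<Longrightarrow> (\<And>i. i \<in> I \<Longrightarrow> finite_supp (c i)) \<Longrightarrow>
   tau (\<lambda>zs. \<Sum>i\<in>I. g i * c i zs) = (\<lambda>x. \<Sum>i\<in>I. g i * tau (c i) x)"
proof (induction I rule: finite_induct)
  case empty then show ?case by (simp add: tau_def)
next
  case (insert i I)
  have "tau (\<lambda>zs. \<Sum>i\<in>insert i I. g i * c i zs)
      = tau (\<lambda>zs. (\<lambda>zs. g i * c i zs) zs + (\<lambda>zs. \<Sum>i\<in>I. g i * c i zs) zs)"
    using insert by simp
  also have "\<dots> = (\<lambda>x. tau (\<lambda>zs. g i * c i zs) x + tau (\<lambda>zs. \<Sum>i\<in>I. g i * c i zs) x)"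
    using insert by (intro tau_add finite_supp_smult finite_supp_sum) auto
  finally show ?case using insert by (simp add: tau_smult)
qed

section \<open>tau is well defined on the graded pieces\<close>

lemma tau_order: "c \<in> sym_free \<iota> n \<Longrightarrow> diff_le \<iota> n (tau c)"
  unfolding tau_def sym_free_iff
  by (rule diff_le_sum) (auto intro: diff_le_comp_list[of _ \<iota>, simplified])

text \<open>The three kinds of generating relations are mapped to operators of lower order:
  additivity exactly to 0, homogeneity to [\<delta>_1 \<cdots> \<delta>_k, a] \<circ> \<delta> \<circ> \<dots>, and symmetry by
  the commutation lemma above.\<close>

lemma tau_additive_relation:
  "set xs \<subseteq> Der \<iota> \<Longrightarrow> set ys \<subseteq> Der \<iota> \<Longrightarrow> \<delta> \<in> Der \<iota> \<Longrightarrow> \<delta>' \<in> Der \<iota> \<Longrightarrow>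
   tau (\<lambda>zs. single (xs @ [(\<lambda>x. \<delta> x + \<delta>' x)] @ ys) zs - single (xs @ [\<delta>] @ ys) zs
        - single (xs @ [\<delta>'] @ ys) zs) = (\<lambda>x. 0)"
proof -
  let ?A = "xs @ [(\<lambda>x. \<delta> x + \<delta>' x)] @ ys" and ?B = "xs @ [\<delta>] @ ys" and ?C = "xs @ [\<delta>'] @ ys"
  assume D: "set xs \<subseteq> Der \<iota>" "set ys \<subseteq> Der \<iota>" "\<delta> \<in> Der \<iota>" "\<delta>' \<in> Der \<iota>"
  have "tau (\<lambda>zs. single ?A zs - single ?B zs - single ?C zs)
      = (\<lambda>x. tau (\<lambda>zs. single ?A zs - single ?B zs) x - tau (single ?C) x)"
    by (intro tau_diff finite_supp_diff finite_supp_single)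
  also have "\<dots> = (\<lambda>x. comp_list ?A x - comp_list ?B x - comp_list ?C x)"
    by (simp only: tau_diff[OF finite_supp_single finite_supp_single] tau_single)
  also have "\<dots> = (\<lambda>x. 0)"
    using D by (simp add: comp_list_slot comp_list_additive Der_add)
  finally show ?thesis .
qed

lemma tau_homogeneous_relation:
  assumes "set xs \<subseteq> Der \<iota>" "set ys \<subseteq> Der \<iota>" "\<delta> \<in> Der \<iota>" "length xs + length ys + 1 = n"
  shows "diff_lower \<iota> n
    (tau (\<lambda>zs. single (xs @ [(\<lambda>x. a * \<delta> x)] @ ys) zs - a * single (xs @ [\<delta>] @ ys) zs))"
proof -
  have tau: "tau (\<lambda>zs. single (xs @ [(\<lambda>x. a * \<delta> x)] @ ys) zs - a * single (xs @ [\<delta>] @ ys) zs)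
      = (\<lambda>x. bracket (comp_list xs) a (\<delta> (comp_list ys x)))"
    by (simp add: tau_diff tau_smult finite_supp_smult finite_supp_single tau_single
        comp_list_slot bracket_def)
  show ?thesis
  proof (cases xs)
    case Nil
    then show ?thesis unfolding tau by (simp add: bracket_def diff_lower_zero)
  next
    case (Cons x xs')
    have "diff_le \<iota> (length xs') (bracket (comp_list xs) a)"
      using diff_le_comp_list[OF assms(1)] Cons by (simp add: diff_le_Suc_bracket)
    moreover have "diff_le \<iota> (Suc (length ys)) (\<delta> \<circ> comp_list ys)"
      using diff_le_comp[OF Der_order_one[OF assms(3)] diff_le_comp_list[OF assms(2)]] by simp
    ultimately have "diff_le \<iota> (length xs' + Suc (length ys))
        (bracket (comp_list xs) a \<circ> (\<delta> \<circ> comp_list ys))"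
      by (rule diff_le_comp)
    moreover have "n = Suc (length xs' + Suc (length ys))" using Cons assms(4) by simp
    ultimately show ?thesis unfolding tau by (simp add: diff_lower_def comp_def)
  qed
qed

lemma tau_symmetric_relation:
  assumes "set xs \<subseteq> Der \<iota>" "length xs = n" "mset ys = mset xs"
  shows "diff_lower \<iota> n (tau (\<lambda>zs. single xs zs - single ys zs))"
proof -
  have tau: "tau (\<lambda>zs. single xs zs - single ys zs) = (\<lambda>x. comp_list xs x - comp_list ys x)"
    by (simp add: tau_diff finite_supp_single tau_single)
  show ?thesis
  proof (cases xs)
    case Nil
    then show ?thesis unfolding tau using assms(2,3) by (simp add: diff_lower_zero)
  next
    case (Cons x xs')
    then show ?thesis
      unfolding tau assms(2)[symmetric] using comp_list_perm_lower[OF assms(1,3)]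
      by (simp add: diff_lower_def)
  qed
qed

lemma sym_rel_finite_supp_lower: "sym_rel_p \<iota> n c \<Longrightarrow> finite_supp c \<and> diff_lower \<iota> n (tau c)"
proof (induction rule: sym_rel_p.induct)
  case zero then show ?case by (simp add: tau_def diff_lower_zero)
next
  case (add c d)
  then show ?case by (simp add: finite_supp_add tau_add diff_lower_plus)
next
  case (smult c a)
  then show ?case by (simp add: finite_supp_smult tau_smult diff_lower_smult)
next
  case (additive xs ys \<delta> \<delta>')
  let ?c = "\<lambda>zs. single (xs @ [(\<lambda>x. \<delta> x + \<delta>' x)] @ ys) zs - single (xs @ [\<delta>] @ ys) zs
      - single (xs @ [\<delta>'] @ ys) zs"
  have "finite_supp ?c" by (intro finite_supp_diff finite_supp_single)
  moreover have "tau ?c = (\<lambda>x. 0)" using additive by (intro tau_additive_relation)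
  ultimately show ?case using diff_lower_zero[of \<iota> n] by simp
next
  case (homogeneous xs ys \<delta> a)
  have "finite_supp (\<lambda>zs. single (xs @ [(\<lambda>x. a * \<delta> x)] @ ys) zs - a * single (xs @ [\<delta>] @ ys) zs)"
    by (intro finite_supp_diff finite_supp_smult finite_supp_single)
  then show ?case using tau_homogeneous_relation[OF homogeneous] by blast
next
  case (symmetric xs ys)
  have "finite_supp (\<lambda>zs. single xs zs - single ys zs)"
    by (intro finite_supp_diff finite_supp_single)
  then show ?case using tau_symmetric_relation[OF symmetric] by blast
qed

lemma tau_sym_rel_lower: "c \<in> sym_rel \<iota> n \<Longrightarrow> diff_lower \<iota> n (tau c)"
  using sym_rel_finite_supp_lower by (auto simp: sym_rel_def)

lemma symbol_tau:
  assumes "c \<in> sym_free \<iota> n" and "length as = n"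
  shows "symbol (tau c) as = (\<Sum>xs | c xs \<noteq> 0. c xs * der_perm xs as)"
proof -
  have "symbol (tau c) as = (\<Sum>xs | c xs \<noteq> 0. c xs * symbol (comp_list xs) as)"
    unfolding tau_def by (rule symbol_sum)
  also have "\<dots> = (\<Sum>xs | c xs \<noteq> 0. c xs * der_perm xs as)"
    using assms by (intro sum.cong refl) (auto simp: sym_free_iff symbol_comp_list)
  finally show ?thesis .
qed

section \<open>Inverting tau up to n! via coordinates\<close>

context Der_retract
begin

definition lift :: "nat \<Rightarrow> ('a list \<Rightarrow> 'a) \<Rightarrow> ('a \<Rightarrow> 'a) list \<Rightarrow> 'a" where
  "lift n F = (\<lambda>zs. \<Sum>J\<in>index_lists n. coord F J * single (map gen J) zs)"

lemma lift_sym_free: "lift n F \<in> sym_free \<iota> n"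
proof -
  have "length xs = n \<and> set xs \<subseteq> Der \<iota>" if "lift n F xs \<noteq> 0" for xs
  proof -
    have "\<exists>J\<in>index_lists n. xs = map gen J"
    proof (rule ccontr)
      assume "\<not> ?thesis"
      then have "lift n F xs = 0" unfolding lift_def single_def by (auto intro: sum.neutral)
      with that show False by simp
    qed
    then show ?thesis using index_lists_length index_lists_Der by fastforce
  qed
  moreover have "finite_supp (lift n F)"
    unfolding lift_def by (intro finite_supp_sum finite_index_lists finite_supp_single)
  ultimately show ?thesis by (simp add: sym_free_iff)
qed

lemma lift_cong: "(\<And>as. length as = n \<Longrightarrow> F as = F' as) \<Longrightarrow> lift n F = lift n F'"
proof -
  assume F: "\<And>as. length as = n \<Longrightarrow> F as = F' as"
  have "coord F J = coord F' J" if "J \<in> index_lists n" for J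
    using index_lists_length[OF that] F by (intro coord_cong) simp
  then show ?thesis unfolding lift_def by (intro ext sum.cong refl) simp
qed

lemma symbol_tau_lift:
  assumes "multider \<iota> n F" "perm_invariant F" "length as = n"
  shows "symbol (tau (lift n F)) as = of_nat (fact n) * F as"
proof -
  have "tau (lift n F) = (\<lambda>x. \<Sum>J\<in>index_lists n. coord F J * tau (single (map gen J)) x)"
    unfolding lift_def by (rule tau_sum[OF finite_index_lists finite_supp_single])
  then have "symbol (tau (lift n F)) as
      = (\<Sum>J\<in>index_lists n. coord F J * symbol (comp_list (map gen J)) as)"
    by (simp add: tau_single symbol_sum)
  also have "\<dots> = (\<Sum>J\<in>index_lists n. coord F J * der_perm (map gen J) as)"
  proof (rule sum.cong[OF refl])
    fix J assume J: "J \<in> index_lists n"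
    show "coord F J * symbol (comp_list (map gen J)) as = coord F J * der_perm (map gen J) as"
      using symbol_comp_list[OF index_lists_Der[OF J]] index_lists_length[OF J] assms(3) by simp
  qed
  also have "\<dots> = of_nat (fact n) * F as"
    by (rule multider_reconstruction[OF assms])
  finally show ?thesis .
qed

lemma coord_der_perm_Cons:
  assumes ds: "set ds \<subseteq> Der \<iota>" "length ds = Suc n" and J: "length J = n"
  shows "coord (der_perm ds) (j # J) = (\<Sum>k<Suc n. s (ds ! k) j * coord (der_perm (remove_nth k ds)) J)"
proof -
  have dk: "ds ! k \<in> Der \<iota>" if "k < Suc n" for k
    using ds that by (auto dest: nth_mem)
  have rk: "multider \<iota> (length J) (der_perm (remove_nth k ds))" if "k < Suc n" for k
    using ds J that set_remove_nth[of k ds] by (intro der_perm_multider) (auto simp: length_remove_nth)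
  have "s (\<lambda>b. der_perm ds (b # bs)) j = (\<Sum>k<Suc n. s (ds ! k) j * der_perm (remove_nth k ds) bs)" for bs
  proof -
    have "(\<lambda>b. der_perm ds (b # bs)) = (\<lambda>b. \<Sum>k<Suc n. der_perm (remove_nth k ds) bs * (ds ! k) b)"
      by (rule ext) (simp add: der_perm_expand_first_arg ds(2) mult.commute del: sum.lessThan_Suc)
    then show ?thesis
      using s_sum[of "{..<Suc n}" "\<lambda>k. ds ! k" "\<lambda>k. der_perm (remove_nth k ds) bs"] dk
      by (simp add: mult.commute del: sum.lessThan_Suc)
  qed
  then have "coord (der_perm ds) (j # J)
      = coord (\<lambda>bs. \<Sum>k<Suc n. s (ds ! k) j * der_perm (remove_nth k ds) bs) J"
    by simp
  also have "\<dots> = (\<Sum>k<Suc n. s (ds ! k) j * coord (der_perm (remove_nth k ds)) J)"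
    using rk by (intro coord_linear) auto
  finally show ?thesis .
qed

lemma lift_der_perm_Suc:
  assumes ds: "set ds \<subseteq> Der \<iota>" "length ds = Suc n"
  shows "lift (Suc n) (der_perm ds) = (\<lambda>zs. \<Sum>k<Suc n. \<Sum>j<m.
           s (ds ! k) j * prefix (gen j) (lift n (der_perm (remove_nth k ds))) zs)"
proof
  fix zs
  have "lift (Suc n) (der_perm ds) zs
      = (\<Sum>j<m. \<Sum>J\<in>index_lists n. coord (der_perm ds) (j # J) * single (gen j # map gen J) zs)"
    by (simp add: lift_def sum_index_lists_Suc del: sum.lessThan_Suc)
  also have "\<dots> = (\<Sum>j<m. \<Sum>J\<in>index_lists n. \<Sum>k<Suc n.
      s (ds ! k) j * (coord (der_perm (remove_nth k ds)) J * single (gen j # map gen J) zs))"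
    by (intro sum.cong refl)
      (simp add: coord_der_perm_Cons[OF ds] index_lists_length sum_distrib_right mult.assoc
        del: sum.lessThan_Suc coord.simps(2))
  also have "\<dots> = (\<Sum>k<Suc n. \<Sum>j<m. s (ds ! k) j *
      (\<Sum>J\<in>index_lists n. coord (der_perm (remove_nth k ds)) J * single (gen j # map gen J) zs))"
    by (simp add: sum_distrib_left del: sum.lessThan_Suc) (subst sum.swap, subst (2) sum.swap, rule refl)
  also have "\<dots> = (\<Sum>k<Suc n. \<Sum>j<m. s (ds ! k) j * prefix (gen j) (lift n (der_perm (remove_nth k ds))) zs)"
    by (simp add: lift_def prefix_sum prefix_single del: sum.lessThan_Suc)
  finally show "lift (Suc n) (der_perm ds) zs = (\<Sum>k<Suc n. \<Sum>j<m.
      s (ds ! k) j * prefix (gen j) (lift n (der_perm (remove_nth k ds))) zs)" .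
qed

lemma single_gen_expand:
  assumes "\<delta> \<in> Der \<iota>" "set xs \<subseteq> Der \<iota>" "length xs = n"
  shows "sym_cong \<iota> (Suc n) (\<lambda>zs. \<Sum>j<m. s \<delta> j * single (gen j # xs) zs) (single (\<delta> # xs))"
proof -
  have "(\<lambda>x. \<Sum>j<m. s \<delta> j * gen j x) = \<delta>"
    by (rule ext) (simp add: Der_expand[OF assms(1)])
  moreover have "sym_cong \<iota> (Suc n) (single ([] @ [(\<lambda>x. \<Sum>j<m. s \<delta> j * gen j x)] @ xs))
      (\<lambda>zs. \<Sum>j<m. s \<delta> j * single ([] @ [gen j] @ xs) zs)"
    using assms by (intro single_slot_sum) (auto intro: gen_Der)
  ultimately show ?thesis by (simp add: sym_cong_sym)
qed

lemma single_remove_nth_cong: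
  assumes "set ds \<subseteq> Der \<iota>" "k < length ds"
  shows "sym_cong \<iota> (length ds) (single (ds ! k # remove_nth k ds)) (single ds)"
proof -
  have "sym_rel_p \<iota> (length ds) (\<lambda>zs. single ds zs - single (ds ! k # remove_nth k ds) zs)"
    using assms mset_remove_nth[of k ds] by (intro sym_rel_p.symmetric) auto
  then show ?thesis unfolding sym_cong_def[symmetric] by (rule sym_cong_sym)
qed

lemma lift_der_perm:
  "set ds \<subseteq> Der \<iota> \<Longrightarrow> length ds = n \<Longrightarrow>
   sym_cong \<iota> n (lift n (der_perm ds)) (\<lambda>zs. of_nat (fact n) * single ds zs)"
proof (induction n arbitrary: ds)
  case 0
  then show ?case by (simp add: lift_def index_lists_0 sym_cong_refl)
next
  case (Suc n)
  have ds: "set ds \<subseteq> Der \<iota>" "length ds = Suc n" using Suc.prems by auto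
  have rk: "set (remove_nth k ds) \<subseteq> Der \<iota>" "length (remove_nth k ds) = n" if "k < Suc n" for k
    using ds that set_remove_nth[of k ds] by (auto simp: length_remove_nth)
  have summand: "sym_cong \<iota> (Suc n)
      (\<lambda>zs. \<Sum>j<m. s (ds ! k) j * prefix (gen j) (lift n (der_perm (remove_nth k ds))) zs)
      (\<lambda>zs. of_nat (fact n) * single ds zs)" if k: "k < Suc n" for k
  proof -
    have "sym_cong \<iota> (Suc n)
        (\<lambda>zs. \<Sum>j<m. s (ds ! k) j * prefix (gen j) (lift n (der_perm (remove_nth k ds))) zs)
        (\<lambda>zs. \<Sum>j<m. s (ds ! k) j * prefix (gen j) (\<lambda>zs. of_nat (fact n) * single (remove_nth k ds) zs) zs)"
      using Suc.IH[OF rk[OF k]] by (intro sym_cong_sum sym_cong_prefix gen_Der) auto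
    also have "(\<lambda>zs. \<Sum>j<m. s (ds ! k) j * prefix (gen j) (\<lambda>zs. of_nat (fact n) * single (remove_nth k ds) zs) zs)
        = (\<lambda>zs. of_nat (fact n) * (\<Sum>j<m. s (ds ! k) j * single (gen j # remove_nth k ds) zs))"
      by (simp add: prefix_smult prefix_single sum_distrib_left mult_ac)
    finally have induct: "sym_cong \<iota> (Suc n)
        (\<lambda>zs. \<Sum>j<m. s (ds ! k) j * prefix (gen j) (lift n (der_perm (remove_nth k ds))) zs)
        (\<lambda>zs. of_nat (fact n) * (\<Sum>j<m. s (ds ! k) j * single (gen j # remove_nth k ds) zs))" .
    have expand: "sym_cong \<iota> (Suc n) (\<lambda>zs. \<Sum>j<m. s (ds ! k) j * single (gen j # remove_nth k ds) zs)
        (single ds)"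
    proof -
      have "ds ! k \<in> Der \<iota>" using ds k nth_mem by fastforce
      moreover have "sym_cong \<iota> (Suc n) (single (ds ! k # remove_nth k ds)) (single ds)"
        using single_remove_nth_cong[OF ds(1), of k] ds(2) k by simp
      ultimately show ?thesis using single_gen_expand[OF _ rk[OF k]] sym_cong_trans by blast
    qed
    show ?thesis by (rule sym_cong_trans[OF induct sym_cong_smult[OF expand]])
  qed
  have "sym_cong \<iota> (Suc n) (\<lambda>zs. \<Sum>k<Suc n. 1 *
        (\<Sum>j<m. s (ds ! k) j * prefix (gen j) (lift n (der_perm (remove_nth k ds))) zs))
      (\<lambda>zs. \<Sum>k<Suc n. 1 * (of_nat (fact n) * single ds zs))"
    using summand by (intro sym_cong_sum) auto
  then have "sym_cong \<iota> (Suc n) (lift (Suc n) (der_perm ds))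
      (\<lambda>zs. \<Sum>k<Suc n. of_nat (fact n) * single ds zs)"
    unfolding lift_der_perm_Suc[OF ds] by simp
  then show ?case by (simp add: algebra_simps del: sum.lessThan_Suc)
qed

end

context Der_retract
begin

lemma lift_zero: "lift n (\<lambda>as. 0) = (\<lambda>zs. 0)"
  by (simp add: lift_def coord_zero)

lemma lift_linear:
  assumes S: "finite S" and F: "\<And>i. i \<in> S \<Longrightarrow> multider \<iota> n (F i)"
  shows "lift n (\<lambda>as. \<Sum>i\<in>S. g i * F i as) = (\<lambda>zs. \<Sum>i\<in>S. g i * lift n (F i) zs)"
proof
  fix zs
  have "coord (\<lambda>as. \<Sum>i\<in>S. g i * F i as) J = (\<Sum>i\<in>S. g i * coord (F i) J)"
    if "J \<in> index_lists n" for J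
    using F index_lists_length[OF that] by (intro coord_linear[OF S]) simp
  then have "lift n (\<lambda>as. \<Sum>i\<in>S. g i * F i as) zs
      = (\<Sum>J\<in>index_lists n. \<Sum>i\<in>S. g i * coord (F i) J * single (map gen J) zs)"
    unfolding lift_def by (intro sum.cong refl) (simp add: sum_distrib_right)
  also have "\<dots> = (\<Sum>i\<in>S. g i * lift n (F i) zs)"
    unfolding lift_def by (subst sum.swap) (simp add: sum_distrib_left mult.assoc)
  finally show "lift n (\<lambda>as. \<Sum>i\<in>S. g i * F i as) zs = (\<Sum>i\<in>S. g i * lift n (F i) zs)" .
qed

lemma fact_cong_lift_symbol:
  assumes c: "c \<in> sym_free \<iota> n"
  shows "sym_cong \<iota> n (\<lambda>zs. of_nat (fact n) * c zs)
           (lift n (\<lambda>as. \<Sum>xs | c xs \<noteq> 0. c xs * der_perm xs as))"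
proof -
  let ?S = "{xs. c xs \<noteq> 0}"
  have S: "finite ?S" and mono: "\<And>xs. xs \<in> ?S \<Longrightarrow> set xs \<subseteq> Der \<iota> \<and> length xs = n"
    using c by (auto simp: sym_free_iff)
  have expand: "(\<lambda>zs. of_nat (fact n) * c zs)
      = (\<lambda>zs. \<Sum>xs\<in>?S. c xs * (of_nat (fact n) * single xs zs))"
  proof
    fix zs
    have "c zs = (\<Sum>xs\<in>?S. c xs * single xs zs)"
      using S by (simp add: single_def if_distrib[of "\<lambda>t. c _ * t"] sum.delta' cong: if_cong)
    then show "of_nat (fact n) * c zs = (\<Sum>xs\<in>?S. c xs * (of_nat (fact n) * single xs zs))"
      by (simp add: sum_distrib_left mult_ac)
  qed
  have monomials: "sym_cong \<iota> n (\<lambda>zs. \<Sum>xs\<in>?S. c xs * (of_nat (fact n) * single xs zs))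
      (\<lambda>zs. \<Sum>xs\<in>?S. c xs * lift n (der_perm xs) zs)"
    using mono by (intro sym_cong_sum[OF S] sym_cong_sym[OF lift_der_perm]) auto
  have collect: "(\<lambda>zs. \<Sum>xs\<in>?S. c xs * lift n (der_perm xs) zs)
      = lift n (\<lambda>as. \<Sum>xs\<in>?S. c xs * der_perm xs as)"
    using mono by (intro lift_linear[symmetric] S der_perm_multider) auto
  show ?thesis using monomials unfolding expand collect .
qed

lemma tau_graded_injective:
  assumes c: "c \<in> sym_free \<iota> n" and low: "diff_lower \<iota> n (tau c)"
    and r: "of_nat (fact n) * (r::'a) = 1"
  shows "c \<in> sym_rel \<iota> n"
proof -
  have "symbol (tau c) as = 0" if "length as = n" for as
    using diff_lower_iff_symbol_zero[OF tau_order[OF c]] low that by blast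
  then have "(\<Sum>xs | c xs \<noteq> 0. c xs * der_perm xs as) = 0" if "length as = n" for as
    using symbol_tau[OF c that] that by simp
  then have "lift n (\<lambda>as. \<Sum>xs | c xs \<noteq> 0. c xs * der_perm xs as) = lift n (\<lambda>as. 0)"
    by (rule lift_cong)
  then have "sym_rel_p \<iota> n (\<lambda>zs. of_nat (fact n) * c zs)"
    using fact_cong_lift_symbol[OF c] by (simp add: sym_cong_def lift_zero)
  then have "sym_rel_p \<iota> n (\<lambda>zs. r * (of_nat (fact n) * c zs))" by (rule sym_rel_p.smult)
  moreover have "(\<lambda>zs. r * (of_nat (fact n) * c zs)) = c"
    using r by (simp add: mult.assoc[symmetric] mult.commute)
  ultimately show ?thesis by (simp add: sym_rel_def)
qed

lemma tau_graded_surjective: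
  assumes \<phi>: "diff_le \<iota> n \<phi>" and r: "of_nat (fact n) * (r::'a) = 1"
  shows "\<exists>c\<in>sym_free \<iota> n. diff_lower \<iota> n (\<lambda>x. \<phi> x - tau c x)"
proof
  let ?c = "\<lambda>zs. r * lift n (symbol \<phi>) zs"
  show c: "?c \<in> sym_free \<iota> n" by (intro sym_free_smult lift_sym_free)
  have "symbol (\<lambda>x. \<phi> x - tau ?c x) as = 0" if "length as = n" for as
  proof -
    have "tau ?c = (\<lambda>x. r * tau (lift n (symbol \<phi>)) x)"
      using lift_sym_free by (intro tau_smult) (simp add: sym_free_iff)
    then have "symbol (tau ?c) as = r * symbol (tau (lift n (symbol \<phi>))) as"
      by (simp add: symbol_smult)
    also have "\<dots> = r * (of_nat (fact n) * symbol \<phi> as)"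
      by (simp only: symbol_tau_lift[OF symbol_multider[OF \<phi>] symbol_perm_invariant that])
    also have "\<dots> = (of_nat (fact n) * r) * symbol \<phi> as"
      by (simp only: ac_simps)
    finally show ?thesis using r by (simp add: symbol_minus)
  qed
  then show "diff_lower \<iota> n (\<lambda>x. \<phi> x - tau ?c x)"
    using diff_lower_iff_symbol_zero[OF diff_le_minus[OF \<phi> tau_order[OF c]]] by blast
qed

end

text \<open>Der(A) being
  projective supplies the retract, and Q \<subseteq> A supplies the inverse of n!; the proof
  never uses that the structure map is multiplicative.\<close>
theorem mainTheorem17:
  fixes \<iota> :: "'k::comm_ring_1 \<Rightarrow> 'a::comm_ring_1"
  assumes "ring_hom_map \<iota>"
    and "contains_rationals TYPE('a)"
    and "Der_fg_projective \<iota>"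
  shows "\<forall>n. (\<forall>c\<in>sym_free \<iota> n. diff_le \<iota> n (tau c))
           \<and> (\<forall>c\<in>sym_rel \<iota> n. diff_lower \<iota> n (tau c))
           \<and> (\<forall>c\<in>sym_free \<iota> n. diff_lower \<iota> n (tau c) \<longrightarrow> c \<in> sym_rel \<iota> n)
           \<and> (\<forall>\<phi>. diff_le \<iota> n \<phi> \<longrightarrow> (\<exists>c\<in>sym_free \<iota> n. diff_lower \<iota> n (\<lambda>x. \<phi> x - tau c x)))"
proof (intro allI conjI ballI impI)
  fix n
  obtain m s p where "(\<forall>\<delta>\<in>Der \<iota>. s \<delta> \<in> free_fin m) \<and> (\<forall>v\<in>free_fin m. p v \<in> Der \<iota>)
    \<and> (\<forall>\<delta>\<in>Der \<iota>. \<forall>\<delta>'\<in>Der \<iota>. s (\<lambda>x. \<delta> x + \<delta>' x) = (\<lambda>i. s \<delta> i + s \<delta>' i))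
    \<and> (\<forall>\<delta>\<in>Der \<iota>. \<forall>a. s (\<lambda>x. a * \<delta> x) = (\<lambda>i. a * s \<delta> i))
    \<and> (\<forall>v\<in>free_fin m. \<forall>w\<in>free_fin m. p (\<lambda>i. v i + w i) = (\<lambda>x. p v x + p w x))
    \<and> (\<forall>v\<in>free_fin m. \<forall>a. p (\<lambda>i. a * v i) = (\<lambda>x. a * p v x))
    \<and> (\<forall>\<delta>\<in>Der \<iota>. p (s \<delta>) = \<delta>)"
    using assms(3) unfolding Der_fg_projective_def by blast
  then interpret Der_retract \<iota> m s p by unfold_locales blast+
  obtain r :: 'a where r: "of_nat (fact n) * r = 1"
    using assms(2) fact_gt_zero[of n] unfolding contains_rationals_def by (metis of_nat_fact)
  show "diff_le \<iota> n (tau c)" if "c \<in> sym_free \<iota> n" for c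
    using that by (rule tau_order)
  show "diff_lower \<iota> n (tau c)" if "c \<in> sym_rel \<iota> n" for c
    using that by (rule tau_sym_rel_lower)
  show "c \<in> sym_rel \<iota> n" if "c \<in> sym_free \<iota> n" "diff_lower \<iota> n (tau c)" for c
    using tau_graded_injective[OF that r] .
  show "\<exists>c\<in>sym_free \<iota> n. diff_lower \<iota> n (\<lambda>x. \<phi> x - tau c x)" if "diff_le \<iota> n \<phi>" for \<phi>
    using tau_graded_surjective[OF that r] .
qed

end
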